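(* Let $u$ be a smooth solution of $\sigma_2(D^2u)=1$ with $\Delta u>0$ on an open set in $\mathbb{R}^n$, and let $b=\ln\Delta u$. Define the linearized operator coefficients $(F_{ij})=\Delta u\,I-D^2u$ (a positive definite matrix), $\Delta_F b:=\sum_{i,j}F_{ij}\partial_{ij}b$ and $|\nabla_F b|^2:=\sum_{i,j}F_{ij}b_ib_j$. Let $\lambda_{\min}$ denote the smallest eigenvalue of $D^2u$. (i) If $n=4$, then at every point $$\Delta_Fb\ge \varepsilon\,|\nabla_F b|^2,\qquad \varepsilon=\frac{2}{9}\Big(\frac12+\frac{\lambda_{\min}}{\Delta u}\Big)>0.$$ (ii) If $n\ge5$, then at every point where $$\frac{\lambda_{\min}}{\Delta u}\ge -\frac{\sqrt{3n^2+1}-(n-1)}{2n},$$ one has $\Delta_F b\ge\varepsilon|\nabla_F b|^2$ with $$\varepsilon=\frac{\sqrt{3n^2+1}-(n+1)}{3(n-1)}\Big(\frac{\sqrt{3n^2+1}-(n-1)}{2n}+\frac{\lambda_{\min}}{\Delta u}\Big).$$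
   Context: $\sigma_2(D^2u)$ is the second elementary symmetric function of the eigenvalues of $D^2u$. For a solution with $\Delta u>0$ one has $\Delta u=\sqrt{2\sigma_2(D^2u)+|D^2u|^2}$, and $F_{ij}=\partial\sigma_2(D^2u)/\partial u_{ij}$ equals $\Delta u\,\delta_{ij}-u_{ij}$. *)

theory Defs
  imports "HOL-Analysis.Analysis"
begin

definition pderiv :: "'n::finite \<Rightarrow> (real^'n \<Rightarrow> real) \<Rightarrow> real^'n \<Rightarrow> real" where
  "pderiv i f = (\<lambda>x. frechet_derivative f (at x) (axis i 1))"

fun iter_pderiv :: "'n::finite list \<Rightarrow> (real^'n \<Rightarrow> real) \<Rightarrow> real^'n \<Rightarrow> real" where
  "iter_pderiv [] f = f"
| "iter_pderiv (i # is) f = pderiv i (iter_pderiv is f)"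

definition smooth_on :: "(real^'n::finite) set \<Rightarrow> (real^'n \<Rightarrow> real) \<Rightarrow> bool" where
  "smooth_on S f \<longleftrightarrow> (\<forall>is. iter_pderiv is f differentiable_on S)"

definition hessian :: "(real^'n::finite \<Rightarrow> real) \<Rightarrow> real^'n \<Rightarrow> real^'n^'n" where
  "hessian f x = (\<chi> i j. pderiv i (pderiv j f) x)"

definition laplacian :: "(real^'n::finite \<Rightarrow> real) \<Rightarrow> real^'n \<Rightarrow> real" where
  "laplacian f x = (\<Sum>i\<in>UNIV. pderiv i (pderiv i f) x)"

text \<open>Second elementary symmetric function of the eigenvalues, written as the
  sum of the principal 2x2 minors (the coefficient of the characteristic polynomial).\<close>
definition sigma2 :: "real^'n::finite^'n \<Rightarrow> real" where
  "sigma2 A = (1/2) * (\<Sum>i\<in>UNIV. \<Sum>j\<in>UNIV. A$i$i * A$j$j - A$i$j * A$j$i)"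

definition is_eigenvalue :: "real^'n::finite^'n \<Rightarrow> real \<Rightarrow> bool" where
  "is_eigenvalue A l \<longleftrightarrow> (\<exists>v. v \<noteq> 0 \<and> A *v v = l *\<^sub>R v)"

definition lambda_min :: "real^'n::finite^'n \<Rightarrow> real" where
  "lambda_min A = Min {l. is_eigenvalue A l}"

end

theory Submission
  imports Defs
begin

(* Differentiating \<sigma>\<^sub>2(D\<^sup>2u) = 1 once and twice gives
   F\<^sub>i\<^sub>j u\<^sub>k\<^sub>i\<^sub>j = 0 and F\<^sub>i\<^sub>j u\<^sub>k\<^sub>k\<^sub>i\<^sub>j = |D\<^sup>2u\<^sub>k|\<^sup>2 - (\<Delta>u\<^sub>k)\<^sup>2, so after the quotient rule the claim
   becomes an inequality between quadratic forms in the totally symmetric tensor T = D\<^sup>3u.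
   In an orthonormal eigenframe of D\<^sup>2u (eigenvalues \<lambda>\<^sub>a, trace S = \<Delta>u) the first identity
   says that for every direction c the diagonal entries T\<^sub>a\<^sub>a\<^sub>c satisfy the linear constraint
   \<Sum>\<^sub>a (S - \<lambda>\<^sub>a) T\<^sub>a\<^sub>a\<^sub>c = 0.  Counting the entries of T with a repeated index bounds |T|\<^sup>2 below by
   \<Sum>\<^sub>c (T\<^sub>c\<^sub>c\<^sub>c\<^sup>2 + 3 \<Sum>\<^sub>a\<^sub>\<noteq>\<^sub>c T\<^sub>a\<^sub>a\<^sub>c\<^sup>2), and a Cauchy-Schwarz inequality weighted by 1 and 3 under the
   constraint bounds each of these terms below by (1 + (1+\<epsilon>)(S - \<lambda>\<^sub>c)/S)(\<Sum>\<^sub>a T\<^sub>a\<^sub>a\<^sub>c)\<^sup>2, which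
   is exactly what is needed.  The weighted inequality reduces to the nonnegativity of a quadratic
   in x = S - \<lambda>\<^sub>c that is concave, hence only has to be checked at x = 0 and x = S - \<lambda>\<^sub>m\<^sub>i\<^sub>n.
   For n = 4 this holds because \<sigma>\<^sub>2 > 0 already forces \<lambda>\<^sub>m\<^sub>i\<^sub>n > -\<Delta>u/2; for n \<ge> 5 it is
   the stated lower bound on \<lambda>\<^sub>m\<^sub>i\<^sub>n/\<Delta>u. *)

section \<open>Partial derivatives\<close>

lemma iter_pderiv_append: "iter_pderiv (xs @ ys) f = iter_pderiv xs (iter_pderiv ys f)"
  by (induction xs) auto

lemma smooth_on_iter_pderiv: "smooth_on S f \<Longrightarrow> smooth_on S (iter_pderiv ys f)"
  unfolding smooth_on_def by (metis iter_pderiv_append)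

lemma smooth_on_pderiv: "smooth_on S f \<Longrightarrow> smooth_on S (pderiv i f)"
  using smooth_on_iter_pderiv[of S f "[i]"] by simp

lemma smooth_on_iter_pderiv_differentiable:
  "open S \<Longrightarrow> smooth_on S f \<Longrightarrow> y \<in> S \<Longrightarrow> iter_pderiv xs f differentiable (at y)"
  unfolding smooth_on_def using differentiable_on_eq_differentiable_at by blast

lemma smooth_on_differentiable:
  "open S \<Longrightarrow> smooth_on S f \<Longrightarrow> y \<in> S \<Longrightarrow> f differentiable (at y)"
  using smooth_on_iter_pderiv_differentiable[of S f y "[]"] by simp

lemma pderiv_eq: "(f has_derivative f') (at x) \<Longrightarrow> pderiv i f x = f' (axis i 1)"
  unfolding pderiv_def using frechet_derivative_at by metis

lemma pderiv_cong_open: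
  assumes S: "open S" and x: "x \<in> S" and fg: "\<And>y. y \<in> S \<Longrightarrow> f y = g y"
  shows "pderiv i f x = pderiv i g x"
proof -
  have "(f has_derivative f') (at x) \<longleftrightarrow> (g has_derivative f') (at x)" for f'
    using has_derivative_transform_within_open[of f f' x UNIV S g, OF _ S x fg]
      has_derivative_transform_within_open[of g f' x UNIV S f, OF _ S x fg[symmetric]] by blast
  then show ?thesis unfolding pderiv_def frechet_derivative_def by simp
qed

lemma iter_pderiv_cong_open:
  assumes S: "open S" and fg: "\<And>y. y \<in> S \<Longrightarrow> f y = g y"
  shows "y \<in> S \<Longrightarrow> iter_pderiv xs f y = iter_pderiv xs g y"
proof (induction xs arbitrary: y)
  case (Cons i xs)
  have "pderiv i (iter_pderiv xs f) y = pderiv i (iter_pderiv xs g) y"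
    by (rule pderiv_cong_open[OF S Cons.prems Cons.IH])
  then show ?case by simp
qed (use fg in simp)

lemma has_real_derivative_along_axis:
  fixes f :: "real^'n \<Rightarrow> real"
  assumes "f differentiable (at (p + s *\<^sub>R axis i 1))"
  shows "((\<lambda>t. f (p + t *\<^sub>R axis i 1)) has_real_derivative pderiv i f (p + s *\<^sub>R axis i 1)) (at s)"
proof -
  let ?f' = "frechet_derivative f (at (p + s *\<^sub>R axis i 1))"
  have fd: "(f has_derivative ?f') (at (p + s *\<^sub>R axis i 1))"
    using assms frechet_derivative_works by blast
  have "((\<lambda>t. p + t *\<^sub>R axis i 1) has_derivative (\<lambda>h. h *\<^sub>R axis i 1)) (at s)"
    by (auto intro!: derivative_eq_intros)
  from has_derivative_compose[OF this fd]
  have "((\<lambda>t. f (p + t *\<^sub>R axis i 1)) has_derivative (\<lambda>h. ?f' (h *\<^sub>R axis i 1))) (at s)" .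
  moreover have "(\<lambda>h. ?f' (h *\<^sub>R axis i 1)) = (*) (pderiv i f (p + s *\<^sub>R axis i 1))"
    using linear_scale[OF has_derivative_linear[OF fd]] by (auto simp: pderiv_def)
  ultimately show ?thesis by (simp add: has_field_derivative_def)
qed

lemma dist_add_axes_le:
  fixes x :: "real^'n"
  shows "dist (x + a *\<^sub>R axis i 1 + b *\<^sub>R axis j 1) x \<le> \<bar>a\<bar> + \<bar>b\<bar>"
proof -
  have "dist (x + a *\<^sub>R axis i 1 + b *\<^sub>R axis j 1) x = norm (a *\<^sub>R (axis i 1 :: real^'n) + b *\<^sub>R axis j 1)"
    by (simp add: dist_norm)
  also have "\<dots> \<le> norm (a *\<^sub>R (axis i 1 :: real^'n)) + norm (b *\<^sub>R (axis j 1 :: real^'n))"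
    by (rule norm_triangle_ineq)
  finally show ?thesis by simp
qed

lemma second_difference_mvt:
  fixes g :: "real^'n \<Rightarrow> real"
  assumes S: "open S" and g: "smooth_on S g" and ball: "ball x r \<subseteq> S" and h: "0 < h" "2*h < r"
  obtains a b where "\<bar>a\<bar> \<le> h" "\<bar>b\<bar> \<le> h"
    "g (x + h *\<^sub>R axis i 1 + h *\<^sub>R axis j 1) - g (x + h *\<^sub>R axis i 1) - g (x + h *\<^sub>R axis j 1) + g x
      = h^2 * pderiv j (pderiv i g) (x + a *\<^sub>R axis i 1 + b *\<^sub>R axis j 1)"
proof -
  let ?ei = "axis i 1 :: real^'n" and ?ej = "axis j 1 :: real^'n"
  have in_S: "x + a *\<^sub>R ?ei + b *\<^sub>R ?ej \<in> S" if "\<bar>a\<bar> \<le> h" "\<bar>b\<bar> \<le> h" for a b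
  proof -
    have "dist x (x + a *\<^sub>R ?ei + b *\<^sub>R ?ej) < r"
      using dist_add_axes_le[of x a i b j] that h by (simp add: dist_commute)
    then show ?thesis using ball by auto
  qed
  have in_S': "x + b *\<^sub>R ?ej + a *\<^sub>R ?ei \<in> S" if "\<bar>a\<bar> \<le> h" "\<bar>b\<bar> \<le> h" for a b
    using in_S[OF that] by (simp add: add_ac)
  define \<phi> where "\<phi> s = g (x + h *\<^sub>R ?ej + s *\<^sub>R ?ei) - g (x + s *\<^sub>R ?ei)" for s
  have d\<phi>: "DERIV \<phi> s :> pderiv i g (x + h *\<^sub>R ?ej + s *\<^sub>R ?ei) - pderiv i g (x + s *\<^sub>R ?ei)"
    if "0 \<le> s" "s \<le> h" for s
  proof -
    have "g differentiable (at (x + h *\<^sub>R ?ej + s *\<^sub>R ?ei))" "g differentiable (at (x + s *\<^sub>R ?ei))"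
      using smooth_on_differentiable[OF S g] in_S'[of s h] in_S'[of s 0] that h by simp_all
    then show ?thesis
      unfolding \<phi>_def by (intro DERIV_diff has_real_derivative_along_axis)
  qed
  obtain \<xi> where \<xi>: "0 < \<xi>" "\<xi> < h" and mvt1:
    "\<phi> h - \<phi> 0 = (h - 0) * (pderiv i g (x + h *\<^sub>R ?ej + \<xi> *\<^sub>R ?ei) - pderiv i g (x + \<xi> *\<^sub>R ?ei))"
    using MVT2[OF h(1) d\<phi>] by auto
  define \<psi> where "\<psi> t = pderiv i g (x + \<xi> *\<^sub>R ?ei + t *\<^sub>R ?ej)" for t
  have d\<psi>: "DERIV \<psi> t :> pderiv j (pderiv i g) (x + \<xi> *\<^sub>R ?ei + t *\<^sub>R ?ej)" if "0 \<le> t" "t \<le> h" for t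
  proof -
    have "pderiv i g differentiable (at (x + \<xi> *\<^sub>R ?ei + t *\<^sub>R ?ej))"
      using smooth_on_differentiable[OF S smooth_on_pderiv[OF g] in_S[of \<xi> t]] that \<xi> by simp
    then show ?thesis unfolding \<psi>_def by (rule has_real_derivative_along_axis)
  qed
  obtain \<eta> where \<eta>: "0 < \<eta>" "\<eta> < h" and mvt2:
    "\<psi> h - \<psi> 0 = (h - 0) * pderiv j (pderiv i g) (x + \<xi> *\<^sub>R ?ei + \<eta> *\<^sub>R ?ej)"
    using MVT2[OF h(1) d\<psi>] by auto
  have "g (x + h *\<^sub>R ?ei + h *\<^sub>R ?ej) - g (x + h *\<^sub>R ?ei) - g (x + h *\<^sub>R ?ej) + g x = \<phi> h - \<phi> 0"
    unfolding \<phi>_def by (simp add: add_ac)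
  also have "\<dots> = h * (\<psi> h - \<psi> 0)" using mvt1 unfolding \<psi>_def by (simp add: add_ac)
  also have "\<dots> = h^2 * pderiv j (pderiv i g) (x + \<xi> *\<^sub>R ?ei + \<eta> *\<^sub>R ?ej)"
    using mvt2 by (simp add: power2_eq_square)
  finally have eq: "g (x + h *\<^sub>R ?ei + h *\<^sub>R ?ej) - g (x + h *\<^sub>R ?ei) - g (x + h *\<^sub>R ?ej) + g x
      = h^2 * pderiv j (pderiv i g) (x + \<xi> *\<^sub>R ?ei + \<eta> *\<^sub>R ?ej)" .
  show ?thesis by (rule that[OF _ _ eq]) (use \<xi> \<eta> in auto)
qed

text \<open>Schwarz's theorem: both mixed partials are continuous and, by the mean value theorem,
  agree with the same second difference quotient at points arbitrarily close to \<open>x\<close>.\<close>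
lemma pderiv_commute:
  fixes g :: "real^'n \<Rightarrow> real"
  assumes S: "open S" and g: "smooth_on S g" and x: "x \<in> S"
  shows "pderiv i (pderiv j g) x = pderiv j (pderiv i g) x"
proof -
  obtain r where r: "r > 0" "ball x r \<subseteq> S" using S x open_contains_ball by blast
  let ?D1 = "pderiv j (pderiv i g)" and ?D2 = "pderiv i (pderiv j g)"
  have cont: "isCont ?D1 x" "isCont ?D2 x"
    using smooth_on_iter_pderiv_differentiable[OF S g x, of "[j,i]"]
      smooth_on_iter_pderiv_differentiable[OF S g x, of "[i,j]"]
    by (simp_all add: differentiable_imp_continuous_within)
  have close: "\<bar>?D2 x - ?D1 x\<bar> < 2*e" if e: "e > 0" for e
  proof -
    obtain d1 where d1: "d1 > 0" "\<And>y. dist y x < d1 \<Longrightarrow> dist (?D1 y) (?D1 x) < e"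
      using cont(1) e unfolding continuous_at_eps_delta by blast
    obtain d2 where d2: "d2 > 0" "\<And>y. dist y x < d2 \<Longrightarrow> dist (?D2 y) (?D2 x) < e"
      using cont(2) e unfolding continuous_at_eps_delta by blast
    define h where "h = min r (min d1 d2) / 3"
    have h: "0 < h" "2*h < r" "2*h < d1" "2*h < d2" using r d1 d2 by (auto simp: h_def)
    obtain a b where ab: "\<bar>a\<bar> \<le> h" "\<bar>b\<bar> \<le> h" and mvt1:
      "g (x + h *\<^sub>R axis i 1 + h *\<^sub>R axis j 1) - g (x + h *\<^sub>R axis i 1) - g (x + h *\<^sub>R axis j 1) + g x
      = h^2 * ?D1 (x + a *\<^sub>R axis i 1 + b *\<^sub>R axis j 1)"
      using second_difference_mvt[OF S g r(2) h(1,2)] by blast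
    obtain a' b' where ab': "\<bar>a'\<bar> \<le> h" "\<bar>b'\<bar> \<le> h" and mvt2:
      "g (x + h *\<^sub>R axis j 1 + h *\<^sub>R axis i 1) - g (x + h *\<^sub>R axis j 1) - g (x + h *\<^sub>R axis i 1) + g x
      = h^2 * ?D2 (x + a' *\<^sub>R axis j 1 + b' *\<^sub>R axis i 1)"
      using second_difference_mvt[OF S g r(2) h(1,2)] by blast
    have "h^2 * ?D1 (x + a *\<^sub>R axis i 1 + b *\<^sub>R axis j 1) = h^2 * ?D2 (x + a' *\<^sub>R axis j 1 + b' *\<^sub>R axis i 1)"
    proof -
      have v: "x + h *\<^sub>R axis i 1 + h *\<^sub>R axis j 1 = x + h *\<^sub>R axis j 1 + h *\<^sub>R (axis i 1 :: real^'n)"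
        by (simp add: add_ac)
      show ?thesis using mvt1 mvt2 unfolding v by linarith
    qed
    then have eq: "?D1 (x + a *\<^sub>R axis i 1 + b *\<^sub>R axis j 1) = ?D2 (x + a' *\<^sub>R axis j 1 + b' *\<^sub>R axis i 1)"
      using h(1) by simp
    have "dist (?D1 (x + a *\<^sub>R axis i 1 + b *\<^sub>R axis j 1)) (?D1 x) < e"
      using d1(2) dist_add_axes_le[of x a i b j] ab h(3) by simp
    moreover have "dist (?D2 (x + a' *\<^sub>R axis j 1 + b' *\<^sub>R axis i 1)) (?D2 x) < e"
      using d2(2) dist_add_axes_le[of x a' j b' i] ab' h(4) by simp
    ultimately show ?thesis using eq by (simp add: dist_real_def)
  qed
  show ?thesis
  proof (rule ccontr)
    assume "?D2 x \<noteq> ?D1 x"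
    then have "\<bar>?D2 x - ?D1 x\<bar> > 0" by simp
    from close[OF half_gt_zero[OF this]] show False by simp
  qed
qed

lemma iter_pderiv_swap:
  assumes S: "open S" and f: "smooth_on S f" and y: "y \<in> S"
  shows "iter_pderiv (xs @ i # j # ys) f y = iter_pderiv (xs @ j # i # ys) f y"
proof -
  have "\<And>z. z \<in> S \<Longrightarrow> pderiv i (pderiv j (iter_pderiv ys f)) z = pderiv j (pderiv i (iter_pderiv ys f)) z"
    by (rule pderiv_commute[OF S smooth_on_iter_pderiv[OF f]])
  from iter_pderiv_cong_open[OF S this y, where xs=xs] show ?thesis by (simp add: iter_pderiv_append)
qed

lemma pderiv_add:
  assumes "f differentiable (at y)" "g differentiable (at y)"
  shows "pderiv k (\<lambda>z. f z + g z) y = pderiv k f y + pderiv k g y"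
  using pderiv_eq[OF has_derivative_add[OF assms[unfolded frechet_derivative_works]]] by (simp add: pderiv_def)

lemma pderiv_diff:
  assumes "f differentiable (at y)" "g differentiable (at y)"
  shows "pderiv k (\<lambda>z. f z - g z) y = pderiv k f y - pderiv k g y"
  using pderiv_eq[OF has_derivative_diff[OF assms[unfolded frechet_derivative_works]]] by (simp add: pderiv_def)

lemma pderiv_mult:
  fixes f g :: "real^'n \<Rightarrow> real"
  assumes "f differentiable (at y)" "g differentiable (at y)"
  shows "pderiv k (\<lambda>z. f z * g z) y = pderiv k f y * g y + f y * pderiv k g y"
  using pderiv_eq[OF has_derivative_mult[OF assms[unfolded frechet_derivative_works]]] by (simp add: pderiv_def)

lemma pderiv_cmult:
  fixes f :: "real^'n \<Rightarrow> real"
  assumes "f differentiable (at y)"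
  shows "pderiv k (\<lambda>z. c * f z) y = c * pderiv k f y"
  using pderiv_eq[OF has_derivative_mult_right[OF assms[unfolded frechet_derivative_works]]] by (simp add: pderiv_def)

lemma pderiv_sum:
  fixes f :: "'a::finite \<Rightarrow> real^'n \<Rightarrow> real"
  assumes "\<And>a. f a differentiable (at y)"
  shows "pderiv k (\<lambda>z. \<Sum>a\<in>UNIV. f a z) y = (\<Sum>a\<in>UNIV. pderiv k (f a) y)"
  using pderiv_eq[OF has_derivative_sum[of UNIV f "\<lambda>a. frechet_derivative (f a) (at y)"]] assms
  by (simp add: pderiv_def frechet_derivative_works)

lemma pderiv_divide:
  fixes f g :: "real^'n \<Rightarrow> real"
  assumes "f differentiable (at y)" "g differentiable (at y)" "g y \<noteq> 0"
  shows "pderiv k (\<lambda>z. f z / g z) y = (pderiv k f y * g y - f y * pderiv k g y) / (g y)^2"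
  using pderiv_eq[OF has_derivative_divide[OF assms(1,2)[unfolded frechet_derivative_works] assms(3)]] assms(3)
  by (simp add: pderiv_def field_simps power2_eq_square)

lemma pderiv_ln:
  fixes f :: "real^'n \<Rightarrow> real"
  assumes "f differentiable (at y)" "f y > 0"
  shows "pderiv k (\<lambda>z. ln (f z)) y = pderiv k f y / f y"
  using pderiv_eq[OF DERIV_compose_FDERIV[OF DERIV_ln[OF assms(2)] assms(1)[unfolded frechet_derivative_works]]]
  by (simp add: pderiv_def divide_inverse)

lemma pderiv_locally_const:
  assumes "open S" "y \<in> S" "\<And>z. z \<in> S \<Longrightarrow> f z = c"
  shows "pderiv k f y = 0"
  using pderiv_cong_open[OF assms, where i=k] by (simp add: pderiv_def)

section \<open>Differentiating the equation\<close>

text \<open>\<open>sigma2_fun P\<close> is \<open>\<sigma>\<^sub>2\<close> of the matrix field \<open>P\<close>, and \<open>sigma2_polar\<close> its polarization,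
  the symmetric bilinear form with \<open>sigma2_polar P P = 2 * sigma2_fun P\<close>.\<close>

definition sigma2_fun :: "('n::finite \<Rightarrow> 'n \<Rightarrow> real^'m::finite \<Rightarrow> real) \<Rightarrow> real^'m \<Rightarrow> real" where
  "sigma2_fun P y = 1/2 * (\<Sum>a\<in>UNIV. \<Sum>b\<in>UNIV. P a a y * P b b y - P a b y * P b a y)"

definition sigma2_polar ::
  "('n::finite \<Rightarrow> 'n \<Rightarrow> real^'m::finite \<Rightarrow> real) \<Rightarrow> ('n \<Rightarrow> 'n \<Rightarrow> real^'m \<Rightarrow> real) \<Rightarrow> real^'m \<Rightarrow> real"
where
  "sigma2_polar P Q y = 1/2 * (\<Sum>a\<in>UNIV. \<Sum>b\<in>UNIV.
     (Q a a y * P b b y + P a a y * Q b b y) - (Q a b y * P b a y + P a b y * Q b a y))"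

lemma pderiv_sigma2_fun:
  fixes P :: "'n::finite \<Rightarrow> 'n \<Rightarrow> real^'m::finite \<Rightarrow> real"
  assumes P: "\<And>a b. P a b differentiable (at y)"
  shows "pderiv k (sigma2_fun P) y = sigma2_polar P (\<lambda>a b. pderiv k (P a b)) y"
proof -
  define g where "g a b z = P a a z * P b b z - P a b z * P b a z" for a b z
  have g: "g a b differentiable (at y)" for a b
    unfolding g_def using P by simp
  have "pderiv k (sigma2_fun P) y = 1/2 * pderiv k (\<lambda>z. \<Sum>a\<in>UNIV. \<Sum>b\<in>UNIV. g a b z) y"
    unfolding sigma2_fun_def g_def[symmetric] using g by (intro pderiv_cmult) simp
  also have "\<dots> = 1/2 * (\<Sum>a\<in>UNIV. \<Sum>b\<in>UNIV. pderiv k (g a b) y)"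
    using g by (simp add: pderiv_sum)
  also have "\<dots> = sigma2_polar P (\<lambda>a b. pderiv k (P a b)) y"
    unfolding sigma2_polar_def g_def using P by (simp add: pderiv_diff pderiv_mult)
  finally show ?thesis .
qed

lemma pderiv_sigma2_polar:
  fixes P Q :: "'n::finite \<Rightarrow> 'n \<Rightarrow> real^'m::finite \<Rightarrow> real"
  assumes P: "\<And>a b. P a b differentiable (at y)" and Q: "\<And>a b. Q a b differentiable (at y)"
  shows "pderiv k (sigma2_polar P Q) y
    = sigma2_polar (\<lambda>a b. pderiv k (P a b)) Q y + sigma2_polar P (\<lambda>a b. pderiv k (Q a b)) y"
proof -
  define g where "g a b z = (Q a a z * P b b z + P a a z * Q b b z) - (Q a b z * P b a z + P a b z * Q b a z)"
    for a b z
  have g: "g a b differentiable (at y)" for a b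
    unfolding g_def using P Q by simp
  have dg: "pderiv k (g a b) y =
      ((pderiv k (Q a a) y * P b b y + pderiv k (P a a) y * Q b b y)
        - (pderiv k (Q a b) y * P b a y + pderiv k (P a b) y * Q b a y))
    + ((Q a a y * pderiv k (P b b) y + P a a y * pderiv k (Q b b) y)
        - (Q a b y * pderiv k (P b a) y + P a b y * pderiv k (Q b a) y))" for a b
  proof -
    have "pderiv k (g a b) y = (pderiv k (Q a a) y * P b b y + Q a a y * pderiv k (P b b) y
         + (pderiv k (P a a) y * Q b b y + P a a y * pderiv k (Q b b) y))
       - (pderiv k (Q a b) y * P b a y + Q a b y * pderiv k (P b a) y
         + (pderiv k (P a b) y * Q b a y + P a b y * pderiv k (Q b a) y))"
      unfolding g_def using P Q by (simp add: pderiv_diff pderiv_add pderiv_mult)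
    then show ?thesis by (simp add: algebra_simps)
  qed
  have "pderiv k (sigma2_polar P Q) y = 1/2 * pderiv k (\<lambda>z. \<Sum>a\<in>UNIV. \<Sum>b\<in>UNIV. g a b z) y"
    unfolding sigma2_polar_def g_def[symmetric] using g by (intro pderiv_cmult) simp
  also have "\<dots> = 1/2 * (\<Sum>a\<in>UNIV. \<Sum>b\<in>UNIV. pderiv k (g a b) y)"
    using g by (simp add: pderiv_sum)
  also have "\<dots> = sigma2_polar (\<lambda>a b. pderiv k (P a b)) Q y + sigma2_polar P (\<lambda>a b. pderiv k (Q a b)) y"
    unfolding sigma2_polar_def
    by (simp only: dg sum.distrib sum_subtractf distrib_left[symmetric]) (simp add: algebra_simps)
  finally show ?thesis .
qed

lemma sigma2_polar_symmetric:
  fixes P Q :: "'n::finite \<Rightarrow> 'n \<Rightarrow> real^'m::finite \<Rightarrow> real"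
  assumes sP: "\<And>a b. P a b y = P b a y" and sQ: "\<And>a b. Q a b y = Q b a y"
  shows "sigma2_polar P Q y
    = (\<Sum>a\<in>UNIV. Q a a y) * (\<Sum>b\<in>UNIV. P b b y) - (\<Sum>a\<in>UNIV. \<Sum>b\<in>UNIV. P a b y * Q a b y)"
proof -
  have pw: "(Q a a y * P b b y + P a a y * Q b b y) - (Q a b y * P b a y + P a b y * Q b a y)
      = Q a a y * P b b y + Q b b y * P a a y - 2 * (P a b y * Q a b y)" for a b
    using sP[of b a] sQ[of b a] by (simp add: algebra_simps)
  have s1: "(\<Sum>a\<in>UNIV. \<Sum>b\<in>UNIV. Q a a y * P b b y) = (\<Sum>a\<in>UNIV. Q a a y) * (\<Sum>b\<in>UNIV. P b b y)"
    by (simp add: sum_product)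
  have s2: "(\<Sum>a\<in>UNIV. \<Sum>b\<in>UNIV. Q b b y * P a a y) = (\<Sum>a\<in>UNIV. Q a a y) * (\<Sum>b\<in>UNIV. P b b y)"
    by (subst sum.swap) (simp add: sum_product)
  have "sigma2_polar P Q y = 1/2 * ((\<Sum>a\<in>UNIV. \<Sum>b\<in>UNIV. Q a a y * P b b y)
      + (\<Sum>a\<in>UNIV. \<Sum>b\<in>UNIV. Q b b y * P a a y) - (\<Sum>a\<in>UNIV. \<Sum>b\<in>UNIV. 2 * (P a b y * Q a b y)))"
    unfolding sigma2_polar_def pw by (simp only: sum.distrib sum_subtractf)
  then show ?thesis unfolding s1 s2 by (simp add: sum_distrib_left[symmetric] mult.commute)
qed

lemma sigma2_symmetric:
  fixes H :: "real^'n^'n"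
  assumes "\<And>i j. H$i$j = H$j$i"
  shows "sigma2 H = (1/2) * ((\<Sum>i\<in>UNIV. H$i$i)^2 - (\<Sum>i\<in>UNIV. \<Sum>j\<in>UNIV. (H$i$j)^2))"
  unfolding sigma2_def using assms
  by (simp add: sum_subtractf power2_eq_square sum_product)

lemma sum_delta_mult [simp]:
  fixes f :: "'n::finite \<Rightarrow> real"
  shows "(\<Sum>j\<in>UNIV. (if i = j then 1 else 0) * f j) = f i"
    and "(\<Sum>j\<in>UNIV. f j * (if i = j then 1 else 0)) = f i"
    and "(\<Sum>j\<in>UNIV. f j * (if j = i then 1 else 0)) = f i"
proof -
  have "(\<Sum>j\<in>UNIV. (if i = j then 1 else 0) * f j) = (\<Sum>j\<in>UNIV. if i = j then f j else 0)"
    and "(\<Sum>j\<in>UNIV. f j * (if i = j then 1 else 0)) = (\<Sum>j\<in>UNIV. if i = j then f j else 0)"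
    and "(\<Sum>j\<in>UNIV. f j * (if j = i then 1 else 0)) = (\<Sum>j\<in>UNIV. if j = i then f j else 0)"
    by (rule sum.cong; simp)+
  then show "(\<Sum>j\<in>UNIV. (if i = j then 1 else 0) * f j) = f i"
    and "(\<Sum>j\<in>UNIV. f j * (if i = j then 1 else 0)) = f i"
    and "(\<Sum>j\<in>UNIV. f j * (if j = i then 1 else 0)) = f i"
    by simp_all
qed

lemma sum_scaled_identity_minus_mult:
  fixes H R :: "'n::finite \<Rightarrow> 'n \<Rightarrow> real"
  shows "(\<Sum>i\<in>UNIV. \<Sum>j\<in>UNIV. (S * (if i = j then 1 else 0) - H i j) * R i j)
    = S * (\<Sum>a\<in>UNIV. R a a) - (\<Sum>a\<in>UNIV. \<Sum>b\<in>UNIV. H a b * R a b)"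
proof -
  have "(\<Sum>j\<in>UNIV. (S * (if i = j then 1 else 0) - H i j) * R i j)
      = S * R i i - (\<Sum>j\<in>UNIV. H i j * R i j)" for i
  proof -
    have "(\<Sum>j\<in>UNIV. (S * (if i = j then 1 else 0)) * R i j) = (\<Sum>j\<in>UNIV. if i = j then S * R i j else 0)"
      by (rule sum.cong) auto
    then show ?thesis by (simp add: left_diff_distrib sum_subtractf)
  qed
  then show ?thesis by (simp add: sum_subtractf sum_distrib_left)
qed

lemma laplacian_eq_trace_hessian: "laplacian u x = (\<Sum>i\<in>UNIV. hessian u x $ i $ i)"
  by (simp add: laplacian_def hessian_def)

locale sigma2_solution =
  fixes u :: "real^'n::finite \<Rightarrow> real" and \<Omega> :: "(real^'n) set"
  assumes open_domain: "open \<Omega>" and smooth: "smooth_on \<Omega> u"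
    and equation: "\<forall>x\<in>\<Omega>. sigma2 (hessian u x) = 1"
    and laplacian_pos: "\<forall>x\<in>\<Omega>. laplacian u x > 0"
begin

abbreviation D2 :: "'n \<Rightarrow> 'n \<Rightarrow> real^'n \<Rightarrow> real" where
  "D2 a b \<equiv> pderiv a (pderiv b u)"

lemma differentiable: "y \<in> \<Omega> \<Longrightarrow> iter_pderiv xs u differentiable (at y)"
  by (rule smooth_on_iter_pderiv_differentiable[OF open_domain smooth])

lemma swap: "y \<in> \<Omega> \<Longrightarrow> iter_pderiv (xs @ i # j # ys) u y = iter_pderiv (xs @ j # i # ys) u y"
  by (rule iter_pderiv_swap[OF open_domain smooth])

lemma D2_symmetric: "y \<in> \<Omega> \<Longrightarrow> D2 a b y = D2 b a y"
  using swap[of y "[]" a b "[]"] by simp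

lemma hessian_symmetric: "x \<in> \<Omega> \<Longrightarrow> hessian u x $ a $ b = hessian u x $ b $ a"
  using D2_symmetric by (simp add: hessian_def)

lemma third_derivative_swap: "x \<in> \<Omega> \<Longrightarrow> iter_pderiv [k,a,b] u x = iter_pderiv [k,b,a] u x"
  using swap[of x "[k]" a b "[]"] by simp

lemma third_derivative_rotate: "x \<in> \<Omega> \<Longrightarrow> iter_pderiv [k,a,b] u x = iter_pderiv [b,a,k] u x"
  using swap[of x "[]" k a "[b]"] swap[of x "[a]" k b "[]"] swap[of x "[]" a b "[k]"] by simp

lemma fourth_derivative_rearrange: "x \<in> \<Omega> \<Longrightarrow> iter_pderiv [i,j,a,a] u x = iter_pderiv [a,a,i,j] u x"
  using swap[of x "[i]" j a "[a]"] swap[of x "[]" i a "[j,a]"] swap[of x "[a,i]" j a "[]"]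
    swap[of x "[a]" i a "[j]"] by simp

lemma first_variation: "y \<in> \<Omega> \<Longrightarrow> sigma2_polar D2 (\<lambda>a b. pderiv k (D2 a b)) y = 0"
proof -
  assume y: "y \<in> \<Omega>"
  have "sigma2_fun D2 z = 1" if "z \<in> \<Omega>" for z
    using equation that by (simp add: sigma2_def sigma2_fun_def hessian_def)
  then have "pderiv k (sigma2_fun D2) y = 0"
    by (rule pderiv_locally_const[OF open_domain y])
  moreover have "D2 a b differentiable (at y)" for a b
    using differentiable[OF y, of "[a,b]"] by simp
  ultimately show ?thesis by (simp add: pderiv_sigma2_fun)
qed

lemma linearized_third_derivatives:
  assumes x: "x \<in> \<Omega>"
  shows "(\<Sum>i\<in>UNIV. \<Sum>j\<in>UNIV. (laplacian u x * (if i = j then 1 else 0) - hessian u x $ i $ j)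
           * iter_pderiv [k,i,j] u x) = 0"
proof -
  have "sigma2_polar D2 (\<lambda>a b. pderiv k (D2 a b)) x
      = (\<Sum>a\<in>UNIV. iter_pderiv [k,a,a] u x) * laplacian u x
        - (\<Sum>a\<in>UNIV. \<Sum>b\<in>UNIV. D2 a b x * iter_pderiv [k,a,b] u x)"
    using D2_symmetric[OF x] third_derivative_swap[OF x]
    by (subst sigma2_polar_symmetric) (auto simp: laplacian_def)
  then show ?thesis
    unfolding sum_scaled_identity_minus_mult using first_variation[OF x, of k]
    by (simp add: hessian_def mult.commute)
qed

lemma linearized_fourth_derivatives:
  assumes x: "x \<in> \<Omega>"
  shows "(\<Sum>i\<in>UNIV. \<Sum>j\<in>UNIV. (laplacian u x * (if i = j then 1 else 0) - hessian u x $ i $ j)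
           * iter_pderiv [k,k,i,j] u x)
    = (\<Sum>i\<in>UNIV. \<Sum>j\<in>UNIV. (iter_pderiv [k,i,j] u x)^2) - (\<Sum>i\<in>UNIV. iter_pderiv [k,i,i] u x)^2"
proof -
  have "pderiv k (sigma2_polar D2 (\<lambda>a b. pderiv k (D2 a b))) x = 0"
    by (rule pderiv_locally_const[OF open_domain x, of _ 0]) (use first_variation in auto)
  moreover have "D2 a b differentiable (at x)" "pderiv k (D2 a b) differentiable (at x)" for a b
    using differentiable[OF x, of "[a,b]"] differentiable[OF x, of "[k,a,b]"] by simp_all
  ultimately have "sigma2_polar (\<lambda>a b. pderiv k (D2 a b)) (\<lambda>a b. pderiv k (D2 a b)) x
      + sigma2_polar D2 (\<lambda>a b. pderiv k (pderiv k (D2 a b))) x = 0"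
    by (simp add: pderiv_sigma2_polar)
  moreover have "sigma2_polar (\<lambda>a b. pderiv k (D2 a b)) (\<lambda>a b. pderiv k (D2 a b)) x
      = (\<Sum>i\<in>UNIV. iter_pderiv [k,i,i] u x)^2 - (\<Sum>i\<in>UNIV. \<Sum>j\<in>UNIV. (iter_pderiv [k,i,j] u x)^2)"
    using third_derivative_swap[OF x]
    by (subst sigma2_polar_symmetric) (auto simp: power2_eq_square)
  moreover have "sigma2_polar D2 (\<lambda>a b. pderiv k (pderiv k (D2 a b))) x
      = (\<Sum>a\<in>UNIV. iter_pderiv [k,k,a,a] u x) * laplacian u x
        - (\<Sum>a\<in>UNIV. \<Sum>b\<in>UNIV. D2 a b x * iter_pderiv [k,k,a,b] u x)"
    using D2_symmetric[OF x] swap[OF x, of "[k,k]" _ _ "[]"]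
    by (subst sigma2_polar_symmetric) (auto simp: laplacian_def)
  ultimately show ?thesis
    unfolding sum_scaled_identity_minus_mult by (simp add: hessian_def mult.commute)
qed

lemma laplacian_differentiable:
  assumes "y \<in> \<Omega>" shows "laplacian u differentiable (at y)"
proof -
  have "D2 a a differentiable (at y)" for a
    using differentiable[OF assms, of "[a,a]"] by simp
  then show ?thesis unfolding laplacian_def[abs_def] by simp
qed

lemma pderiv_laplacian: "y \<in> \<Omega> \<Longrightarrow> pderiv i (laplacian u) y = (\<Sum>a\<in>UNIV. iter_pderiv [i,a,a] u y)"
  using pderiv_sum[of "\<lambda>a. D2 a a" y i] differentiable[of y "[_,_]"]
  unfolding laplacian_def[abs_def] by simp

lemma pderiv_log_laplacian:
  "y \<in> \<Omega> \<Longrightarrow> pderiv i (\<lambda>z. ln (laplacian u z)) y = (\<Sum>a\<in>UNIV. iter_pderiv [i,a,a] u y) / laplacian u y"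
  using pderiv_ln[OF laplacian_differentiable] laplacian_pos pderiv_laplacian by simp

lemma pderiv2_log_laplacian:
  assumes x: "x \<in> \<Omega>"
  shows "pderiv i (pderiv j (\<lambda>z. ln (laplacian u z))) x
    = ((\<Sum>a\<in>UNIV. iter_pderiv [a,a,i,j] u x) * laplacian u x
       - (\<Sum>a\<in>UNIV. iter_pderiv [j,a,a] u x) * (\<Sum>a\<in>UNIV. iter_pderiv [i,a,a] u x)) / (laplacian u x)^2"
proof -
  define N where "N y = (\<Sum>a\<in>UNIV. iter_pderiv [j,a,a] u y)" for y
  have d3: "iter_pderiv [j,a,a] u differentiable (at x)" for a
    using differentiable[OF x] .
  then have "N differentiable (at x)"
    unfolding N_def by simp
  moreover have "pderiv i N x = (\<Sum>a\<in>UNIV. iter_pderiv [i,j,a,a] u x)"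
    unfolding N_def using pderiv_sum[of "\<lambda>a. iter_pderiv [j,a,a] u" x i] d3 by simp
  moreover have "(\<Sum>a\<in>UNIV. iter_pderiv [i,j,a,a] u x) = (\<Sum>a\<in>UNIV. iter_pderiv [a,a,i,j] u x)"
    using fourth_derivative_rearrange[OF x] by simp
  moreover have "pderiv i (pderiv j (\<lambda>z. ln (laplacian u z))) x = pderiv i (\<lambda>y. N y / laplacian u y) x"
    by (rule pderiv_cong_open[OF open_domain x]) (simp add: pderiv_log_laplacian N_def)
  moreover have "laplacian u x \<noteq> 0"
    using laplacian_pos x by auto
  ultimately show ?thesis
    using pderiv_divide[of N x "laplacian u" i] laplacian_differentiable[OF x] pderiv_laplacian[OF x]
    unfolding N_def by simp
qed

end

section \<open>Symmetric matrices\<close>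

lemma symmetric_matrix_inner_swap:
  fixes A :: "real^'n^'n"
  assumes "\<And>i j. A$i$j = A$j$i"
  shows "x \<bullet> (A *v y) = y \<bullet> (A *v x)"
proof -
  have "transpose A = A" using assms by (simp add: transpose_def vec_eq_iff)
  then have "x v* A = A *v x" by (metis vector_transpose_matrix)
  then show ?thesis using dot_lmul_matrix[of x A y] by (simp add: inner_commute)
qed

lemma linear_coeff_zero_if_quadratic_nonneg:
  fixes c d :: real
  assumes "\<And>t. 0 \<le> 2*t*c + t^2*d"
  shows "c = 0"
proof (rule ccontr)
  assume c: "c \<noteq> 0"
  define \<delta> where "\<delta> = 1 / (\<bar>d\<bar> + 1)"
  have \<delta>: "\<delta> > 0" "\<delta> * d \<le> 1"
    unfolding \<delta>_def by (auto simp: field_simps)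
  have "0 \<le> 2*(-c*\<delta>)*c + (-c*\<delta>)^2*d" by (rule assms)
  also have "\<dots> = c^2 * \<delta> * (-2 + \<delta> * d)" by (simp add: power2_eq_square algebra_simps)
  also have "\<dots> \<le> c^2 * \<delta> * (-1)"
    using \<delta> by (intro mult_left_mono) auto
  finally show False using c \<delta> by (simp add: mult_le_0_iff)
qed

text \<open>The first variation of the Rayleigh quotient vanishes in every admissible direction.\<close>
lemma rayleigh_minimizer_eigenvector:
  fixes A :: "real^'n^'n"
  assumes sym: "\<And>i j. A$i$j = A$j$i" and W: "subspace W" and invariant: "\<And>w. w \<in> W \<Longrightarrow> A *v w \<in> W"
    and v: "v \<in> W" "v \<bullet> v = 1"
    and min: "\<And>y. y \<in> W \<Longrightarrow> (v \<bullet> (A *v v)) * (y \<bullet> y) \<le> y \<bullet> (A *v y)"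
  shows "A *v v = (v \<bullet> (A *v v)) *\<^sub>R v"
proof -
  define m where "m = v \<bullet> (A *v v)"
  have orth: "w \<bullet> (A *v v) - m * (v \<bullet> w) = 0" if w: "w \<in> W" for w
  proof (rule linear_coeff_zero_if_quadratic_nonneg[where d = "w \<bullet> (A *v w) - m * (w \<bullet> w)"])
    fix t :: real
    have "v + t *\<^sub>R w \<in> W" using W v w by (simp add: subspace_add subspace_scale)
    from min[OF this] show "0 \<le> 2*t*(w \<bullet> (A *v v) - m * (v \<bullet> w)) + t^2*(w \<bullet> (A *v w) - m * (w \<bullet> w))"
      using symmetric_matrix_inner_swap[OF sym, of v w] v(2) unfolding m_def
      by (simp add: matrix_vector_right_distrib matrix_vector_mult_scaleR inner_add_left
          inner_add_right inner_commute power2_eq_square algebra_simps)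
  qed
  define r where "r = A *v v - m *\<^sub>R v"
  have "r \<in> W" unfolding r_def using W invariant v by (simp add: subspace_diff subspace_scale)
  moreover have "r \<bullet> r = r \<bullet> (A *v v) - m * (v \<bullet> r)"
    by (simp add: r_def inner_diff_left inner_diff_right inner_commute algebra_simps)
  ultimately have "r = 0" using orth by simp
  then show ?thesis unfolding r_def m_def by simp
qed

lemma rayleigh_minimizer_exists:
  fixes A :: "real^'n^'n"
  assumes W: "subspace W" and z: "z \<in> W" "z \<noteq> 0"
  obtains v where "v \<in> W" "v \<bullet> v = 1" "\<And>y. y \<in> W \<Longrightarrow> (v \<bullet> (A *v v)) * (y \<bullet> y) \<le> y \<bullet> (A *v y)"
proof -
  define K where "K = sphere 0 1 \<inter> W"
  define q where "q x = x \<bullet> (A *v x)" for x :: "real^'n"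
  have "(1 / norm z) *\<^sub>R z \<in> K"
    unfolding K_def using z W by (simp add: subspace_scale)
  moreover have "compact K"
    unfolding K_def using closed_subspace[OF W] by (simp add: compact_Int_closed)
  moreover have "continuous_on K q"
    unfolding q_def by (intro continuous_intros linear_continuous_on matrix_vector_mul_bounded_linear)
  ultimately obtain v where v: "v \<in> K" and vmin: "\<And>y. y \<in> K \<Longrightarrow> q v \<le> q y"
    using continuous_attains_inf[of K q] by blast
  have "q v * (y \<bullet> y) \<le> q y" if "y \<in> W" for y
  proof (cases "y = 0")
    case False
    then have "(1 / norm y) *\<^sub>R y \<in> K"
      unfolding K_def using that W by (simp add: subspace_scale)
    from vmin[OF this] have "q v \<le> q y / (norm y)^2"
      by (simp add: q_def matrix_vector_mult_scaleR power2_eq_square divide_inverse mult_ac)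
    then show ?thesis using False by (simp add: pos_le_divide_eq dot_square_norm)
  qed (simp add: q_def)
  moreover have "v \<in> W" "v \<bullet> v = 1"
    using v unfolding K_def by (auto simp: dot_square_norm)
  ultimately show ?thesis using that unfolding q_def by blast
qed

lemma symmetric_eigenvector_orthogonal_to:
  fixes A :: "real^'n^'n" and B :: "(real^'n) set"
  assumes sym: "\<And>i j. A$i$j = A$j$i" and B: "finite B" "card B < CARD('n)"
    and eig: "\<And>b. b \<in> B \<Longrightarrow> \<exists>l. A *v b = l *\<^sub>R b"
  obtains v l where "norm v = 1" "A *v v = l *\<^sub>R v" "\<forall>b\<in>B. v \<bullet> b = 0"
proof -
  define W where "W = {x. \<forall>b\<in>B. orthogonal b x}"
  have W: "subspace W" unfolding W_def by (rule subspace_orthogonal_to_vectors)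
  have invariant: "A *v w \<in> W" if "w \<in> W" for w
  proof -
    have "b \<bullet> (A *v w) = 0" if "b \<in> B" for b
    proof -
      obtain l where "A *v b = l *\<^sub>R b" using eig[OF \<open>b \<in> B\<close>] by blast
      then show ?thesis
        using symmetric_matrix_inner_swap[OF sym, of b w] \<open>w \<in> W\<close> \<open>b \<in> B\<close>
        by (simp add: W_def orthogonal_def inner_commute)
    qed
    then show ?thesis by (simp add: W_def orthogonal_def)
  qed
  have "dim B < DIM(real^'n)"
    using dim_le_card[of B B] B by (simp add: span_base subsetI)
  then obtain z :: "real^'n" where z: "z \<noteq> 0" "\<And>y. y \<in> span B \<Longrightarrow> orthogonal z y"
    using orthogonal_to_subspace_exists by metis
  then have "z \<in> W" unfolding W_def by (auto simp: orthogonal_commute span_base)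
  then obtain v where v: "v \<in> W" "v \<bullet> v = 1"
    and min: "\<And>y. y \<in> W \<Longrightarrow> (v \<bullet> (A *v v)) * (y \<bullet> y) \<le> y \<bullet> (A *v y)"
    using rayleigh_minimizer_exists[OF W _ z(1), of A] by blast
  have "A *v v = (v \<bullet> (A *v v)) *\<^sub>R v"
    by (rule rayleigh_minimizer_eigenvector[OF sym W invariant v min])
  moreover have "norm v = 1" using v(2) by (simp add: norm_eq_1)
  moreover have "\<forall>b\<in>B. v \<bullet> b = 0" using v(1) unfolding W_def by (simp add: orthogonal_def inner_commute)
  ultimately show ?thesis using that by blast
qed

lemma symmetric_orthonormal_eigenvectors:
  fixes A :: "real^'n^'n"
  assumes sym: "\<And>i j. A$i$j = A$j$i"
  shows "k \<le> CARD('n) \<Longrightarrow> \<exists>B. finite B \<and> card B = k \<and> (\<forall>v\<in>B. norm v = 1 \<and> (\<exists>l. A *v v = l *\<^sub>R v))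
          \<and> (\<forall>v\<in>B. \<forall>w\<in>B. v \<noteq> w \<longrightarrow> v \<bullet> w = 0)"
proof (induction k)
  case 0
  show ?case by (intro exI[of _ "{}"]) simp
next
  case (Suc k)
  then obtain B where B: "finite B" "card B = k" "\<forall>v\<in>B. norm v = 1 \<and> (\<exists>l. A *v v = l *\<^sub>R v)"
    "\<forall>v\<in>B. \<forall>w\<in>B. v \<noteq> w \<longrightarrow> v \<bullet> w = 0" by auto
  obtain v l where v: "norm v = 1" "A *v v = l *\<^sub>R v" "\<forall>b\<in>B. v \<bullet> b = 0"
    using symmetric_eigenvector_orthogonal_to[OF sym B(1)] B(2,3) Suc.prems by auto
  then have "v \<notin> B" by auto
  then show ?case
    using B v by (intro exI[of _ "insert v B"]) (auto simp: inner_commute)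
qed

lemma symmetric_matrix_orthonormal_eigenbasis:
  fixes A :: "real^'n^'n"
  assumes sym: "\<And>i j. A$i$j = A$j$i"
  obtains e :: "'n \<Rightarrow> real^'n" and l :: "'n \<Rightarrow> real"
  where "\<And>a b. e a \<bullet> e b = (if a = b then 1 else 0)" "\<And>a. A *v e a = l a *\<^sub>R e a"
proof -
  obtain B where B: "finite B" "card B = CARD('n)" "\<forall>v\<in>B. norm v = 1 \<and> (\<exists>l. A *v v = l *\<^sub>R v)"
    "\<forall>v\<in>B. \<forall>w\<in>B. v \<noteq> w \<longrightarrow> v \<bullet> w = 0"
    using symmetric_orthonormal_eigenvectors[OF sym, of "CARD('n)"] by auto
  obtain e where e: "bij_betw e (UNIV::'n set) B"
    using finite_same_card_bij[of "UNIV::'n set" B] B(1,2) by auto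
  then have eB: "e a \<in> B" and e_inj: "e a = e b \<Longrightarrow> a = b" for a b
    by (auto simp: bij_betw_def inj_on_def)
  define l where "l a = (SOME c. A *v e a = c *\<^sub>R e a)" for a
  have "A *v e a = l a *\<^sub>R e a" for a
    unfolding l_def using B(3) eB[of a] by (metis (mono_tags, lifting) someI_ex)
  moreover have "e a \<bullet> e b = (if a = b then 1 else 0)" for a b
  proof (cases "a = b")
    case True
    then show ?thesis using B(3) eB[of a] by (simp add: dot_square_norm)
  next
    case False
    then have "e a \<noteq> e b" using e_inj by blast
    then show ?thesis using B(4) eB False by auto
  qed
  ultimately show ?thesis using that by blast
qed

lemma orthonormal_rows_imp_columns:
  fixes e :: "'n \<Rightarrow> real^'n"
  assumes "\<And>a b. e a \<bullet> e b = (if a = b then 1 else 0)"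
  shows "(\<Sum>a\<in>UNIV. e a $ i * e a $ j) = (if i = j then 1 else 0)"
proof -
  define Q :: "real^'n^'n" where "Q = (\<chi> i a. e a $ i)"
  have "transpose Q ** Q = mat 1"
    using assms by (simp add: Q_def vec_eq_iff matrix_matrix_mult_def transpose_def mat_def inner_vec_def)
  then have "orthogonal_matrix Q" by (simp add: orthogonal_matrix)
  then have "Q ** transpose Q = mat 1" by (simp add: orthogonal_matrix_def)
  then have "(Q ** transpose Q) $ i $ j = mat 1 $ i $ j" by simp
  then show ?thesis by (simp add: Q_def matrix_matrix_mult_def transpose_def mat_def)
qed

lemma symmetric_eigenvalues_eq_range:
  fixes A :: "real^'n^'n" and e :: "'n \<Rightarrow> real^'n" and l :: "'n \<Rightarrow> real"
  assumes sym: "\<And>i j. A$i$j = A$j$i"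
    and on: "\<And>a b. e a \<bullet> e b = (if a = b then 1 else 0)" and ev: "\<And>a. A *v e a = l a *\<^sub>R e a"
  shows "{c. is_eigenvalue A c} = range l"
proof
  show "range l \<subseteq> {c. is_eigenvalue A c}"
  proof clarify
    fix a
    have "e a \<noteq> 0" using on[of a a] by auto
    then show "is_eigenvalue A (l a)" unfolding is_eigenvalue_def using ev by blast
  qed
  show "{c. is_eigenvalue A c} \<subseteq> range l"
  proof clarify
    fix c assume "is_eigenvalue A c"
    then obtain v where v: "v \<noteq> 0" "A *v v = c *\<^sub>R v" unfolding is_eigenvalue_def by blast
    show "c \<in> range l"
    proof (rule ccontr)
      assume c: "c \<notin> range l"
      have "(c - l a) * (e a \<bullet> v) = 0" for a
        using symmetric_matrix_inner_swap[OF sym, of "e a" v] v(2) ev[of a]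
        by (simp add: inner_commute algebra_simps)
      then have z: "e a \<bullet> v = 0" for a using c by auto
      have "v $ i = (\<Sum>j\<in>UNIV. (\<Sum>a\<in>UNIV. e a $ i * e a $ j) * v $ j)" for i
        by (simp add: orthonormal_rows_imp_columns[OF on])
      also have "\<dots> i = (\<Sum>j\<in>UNIV. \<Sum>a\<in>UNIV. e a $ i * (e a $ j * v $ j))" for i
        by (simp add: sum_distrib_right mult.assoc)
      also have "\<dots> i = (\<Sum>a\<in>UNIV. e a $ i * (e a \<bullet> v))" for i
        by (subst sum.swap) (simp add: inner_vec_def sum_distrib_left)
      finally have "v = 0" using z by (simp add: vec_eq_iff)
      then show False using v(1) by simp
    qed
  qed
qed

lemma symmetric_matrix_diagonalization:
  fixes H :: "real^'n^'n"
  assumes sym: "\<And>i j. H$i$j = H$j$i"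
  obtains E :: "'n \<Rightarrow> 'n \<Rightarrow> real" and l :: "'n \<Rightarrow> real"
  where "\<And>a b. (\<Sum>i\<in>UNIV. E a i * E b i) = (if a = b then 1 else 0)"
    "\<And>i j. (\<Sum>a\<in>UNIV. E a i * E a j) = (if i = j then 1 else 0)"
    "\<And>i j. H$i$j = (\<Sum>a\<in>UNIV. l a * E a i * E a j)"
    "lambda_min H = Min (range l)"
proof -
  obtain e :: "'n \<Rightarrow> real^'n" and l where on: "\<And>a b. e a \<bullet> e b = (if a = b then 1 else 0)"
    and ev: "\<And>a. H *v e a = l a *\<^sub>R e a"
    using symmetric_matrix_orthonormal_eigenbasis[OF sym] by blast
  define E where "E a i = e a $ i" for a i
  have rows: "(\<Sum>i\<in>UNIV. E a i * E b i) = (if a = b then 1 else 0)" for a b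
    using on[of a b] unfolding E_def by (simp add: inner_vec_def)
  have cols: "(\<Sum>a\<in>UNIV. E a i * E a j) = (if i = j then 1 else 0)" for i j
    unfolding E_def by (rule orthonormal_rows_imp_columns[OF on])
  have evc: "(\<Sum>k\<in>UNIV. H$i$k * E a k) = l a * E a i" for a i
    using arg_cong[OF ev[of a], of "\<lambda>v. v $ i"] unfolding E_def by (simp add: matrix_vector_mult_def)
  have "H$i$j = (\<Sum>a\<in>UNIV. l a * E a i * E a j)" for i j
  proof -
    have "(\<Sum>a\<in>UNIV. l a * E a i * E a j) = (\<Sum>a\<in>UNIV. \<Sum>k\<in>UNIV. H$i$k * (E a k * E a j))"
      by (simp add: evc[symmetric] sum_distrib_right mult.assoc)
    also have "\<dots> = (\<Sum>k\<in>UNIV. H$i$k * (\<Sum>a\<in>UNIV. E a k * E a j))"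
      by (subst sum.swap) (simp add: sum_distrib_left)
    also have "\<dots> = H$i$j"
      by (simp add: cols)
    finally show ?thesis by simp
  qed
  moreover have "lambda_min H = Min (range l)"
    unfolding lambda_min_def using symmetric_eigenvalues_eq_range[OF sym on ev] by simp
  ultimately show ?thesis using that rows cols by blast
qed

section \<open>Orthonormal frames\<close>

lemma sum_move_outer_inside2:
  "(\<Sum>a\<in>A. \<Sum>i\<in>I. \<Sum>j\<in>J. f a i j) = (\<Sum>i\<in>I. \<Sum>j\<in>J. \<Sum>a\<in>A. f a i j)"
  by (subst sum.swap) (rule sum.cong[OF refl sum.swap])

lemma sum_move_outer_inside3:
  "(\<Sum>a\<in>A. \<Sum>i\<in>I. \<Sum>j\<in>J. \<Sum>k\<in>K. f a i j k) = (\<Sum>i\<in>I. \<Sum>j\<in>J. \<Sum>k\<in>K. \<Sum>a\<in>A. f a i j k)"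
proof -
  have "(\<Sum>a\<in>A. \<Sum>i\<in>I. \<Sum>j\<in>J. \<Sum>k\<in>K. f a i j k) = (\<Sum>i\<in>I. \<Sum>a\<in>A. \<Sum>j\<in>J. \<Sum>k\<in>K. f a i j k)"
    by (rule sum.swap)
  also have "\<dots> = (\<Sum>i\<in>I. \<Sum>j\<in>J. \<Sum>a\<in>A. \<Sum>k\<in>K. f a i j k)"
    by (rule sum.cong[OF refl sum.swap])
  also have "\<dots> = (\<Sum>i\<in>I. \<Sum>j\<in>J. \<Sum>k\<in>K. \<Sum>a\<in>A. f a i j k)"
    by (rule sum.cong[OF refl sum.cong[OF refl sum.swap]])
  finally show ?thesis .
qed

lemma sum_move_inner_outside3:
  "(\<Sum>i\<in>I. \<Sum>j\<in>J. \<Sum>k\<in>K. f i j k) = (\<Sum>k\<in>K. \<Sum>i\<in>I. \<Sum>j\<in>J. f i j k)"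
proof -
  have "(\<Sum>i\<in>I. \<Sum>j\<in>J. \<Sum>k\<in>K. f i j k) = (\<Sum>i\<in>I. \<Sum>k\<in>K. \<Sum>j\<in>J. f i j k)"
    by (rule sum.cong[OF refl sum.swap])
  also have "\<dots> = (\<Sum>k\<in>K. \<Sum>i\<in>I. \<Sum>j\<in>J. f i j k)"
    by (rule sum.swap)
  finally show ?thesis .
qed

locale orthonormal_frame =
  fixes E :: "'n::finite \<Rightarrow> 'n \<Rightarrow> real"
  assumes rows: "\<And>a b. (\<Sum>i\<in>UNIV. E a i * E b i) = (if a = b then 1 else 0)"
    and cols: "\<And>i j. (\<Sum>a\<in>UNIV. E a i * E a j) = (if i = j then 1 else 0)"
begin

lemma sum_sq_coords: "(\<Sum>a\<in>UNIV. (\<Sum>i\<in>UNIV. E a i * f i)^2) = (\<Sum>i\<in>UNIV. (f i)^2)"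
proof -
  have "(\<Sum>a\<in>UNIV. (\<Sum>i\<in>UNIV. E a i * f i)^2)
      = (\<Sum>a\<in>UNIV. \<Sum>i\<in>UNIV. \<Sum>j\<in>UNIV. (E a i * f i) * (E a j * f j))"
    by (simp add: power2_eq_square sum_product)
  also have "\<dots> = (\<Sum>i\<in>UNIV. \<Sum>j\<in>UNIV. \<Sum>a\<in>UNIV. (E a i * f i) * (E a j * f j))"
    by (rule sum_move_outer_inside2)
  also have "\<dots> = (\<Sum>i\<in>UNIV. \<Sum>j\<in>UNIV. (f i * f j) * (\<Sum>a\<in>UNIV. E a i * E a j))"
    by (simp add: sum_distrib_left mult_ac)
  also have "\<dots> = (\<Sum>i\<in>UNIV. (f i)^2)"
    by (simp add: cols power2_eq_square)
  finally show ?thesis .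
qed

definition diag :: "('n \<Rightarrow> real) \<Rightarrow> 'n \<Rightarrow> 'n \<Rightarrow> real" where
  "diag l i j = (\<Sum>a\<in>UNIV. l a * E a i * E a j)"

lemma trace_diag: "(\<Sum>i\<in>UNIV. diag l i i) = (\<Sum>a\<in>UNIV. l a)"
proof -
  have "(\<Sum>i\<in>UNIV. diag l i i) = (\<Sum>a\<in>UNIV. l a * (\<Sum>i\<in>UNIV. E a i * E a i))"
    unfolding diag_def by (subst sum.swap) (simp add: sum_distrib_left mult_ac)
  then show ?thesis by (simp add: rows)
qed

lemma sum_sq_diag: "(\<Sum>i\<in>UNIV. \<Sum>j\<in>UNIV. (diag l i j)^2) = (\<Sum>a\<in>UNIV. (l a)^2)"
proof -
  have "(\<Sum>j\<in>UNIV. (diag l i j)^2) = (\<Sum>a\<in>UNIV. (l a * E a i)^2)" for i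
  proof -
    interpret transposed: orthonormal_frame "\<lambda>j a. E a j"
      by unfold_locales (simp_all add: rows cols)
    show ?thesis
      unfolding diag_def using transposed.sum_sq_coords[of "\<lambda>a. l a * E a i"] by (simp add: mult_ac)
  qed
  then have "(\<Sum>i\<in>UNIV. \<Sum>j\<in>UNIV. (diag l i j)^2) = (\<Sum>i\<in>UNIV. \<Sum>a\<in>UNIV. (l a)^2 * (E a i * E a i))"
    by (simp add: power2_eq_square mult_ac)
  also have "\<dots> = (\<Sum>a\<in>UNIV. (l a)^2 * (\<Sum>i\<in>UNIV. E a i * E a i))"
    by (subst sum.swap) (simp add: sum_distrib_left)
  finally show ?thesis by (simp add: rows)
qed

lemma quadratic_form_diag:
  "(\<Sum>c\<in>UNIV. (S - l c) * (\<Sum>k\<in>UNIV. E c k * v k)^2)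
     = (\<Sum>i\<in>UNIV. \<Sum>j\<in>UNIV. (S * (if i = j then 1 else 0) - diag l i j) * v i * v j)"
proof -
  have sq: "(\<Sum>k\<in>UNIV. E c k * v k)^2 = (\<Sum>i\<in>UNIV. \<Sum>j\<in>UNIV. (E c i * v i) * (E c j * v j))" for c
    by (simp only: power2_eq_square sum_product)
  have "(\<Sum>c\<in>UNIV. l c * (\<Sum>k\<in>UNIV. E c k * v k)^2)
      = (\<Sum>c\<in>UNIV. \<Sum>i\<in>UNIV. \<Sum>j\<in>UNIV. l c * (E c i * v i) * (E c j * v j))"
    by (simp only: sq sum_distrib_left mult.assoc)
  also have "\<dots> = (\<Sum>i\<in>UNIV. \<Sum>j\<in>UNIV. diag l i j * v i * v j)"
    unfolding diag_def by (subst sum_move_outer_inside2) (simp add: sum_distrib_left mult_ac)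
  finally have "(\<Sum>c\<in>UNIV. l c * (\<Sum>k\<in>UNIV. E c k * v k)^2) = (\<Sum>i\<in>UNIV. \<Sum>j\<in>UNIV. diag l i j * v i * v j)" .
  moreover have "(\<Sum>c\<in>UNIV. (S - l c) * (\<Sum>k\<in>UNIV. E c k * v k)^2)
      = S * (\<Sum>c\<in>UNIV. (\<Sum>k\<in>UNIV. E c k * v k)^2) - (\<Sum>c\<in>UNIV. l c * (\<Sum>k\<in>UNIV. E c k * v k)^2)"
    by (simp add: left_diff_distrib sum_subtractf sum_distrib_left)
  moreover have "(\<Sum>i\<in>UNIV. \<Sum>j\<in>UNIV. (S * (if i = j then 1 else 0) - diag l i j) * v i * v j)
      = S * (\<Sum>i\<in>UNIV. (v i)^2) - (\<Sum>i\<in>UNIV. \<Sum>j\<in>UNIV. diag l i j * v i * v j)"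
    using sum_scaled_identity_minus_mult[of S "diag l" "\<lambda>i j. v i * v j"]
    by (simp add: mult.assoc power2_eq_square)
  ultimately show ?thesis by (simp add: sum_sq_coords)
qed

definition rotate3 :: "('n \<Rightarrow> 'n \<Rightarrow> 'n \<Rightarrow> real) \<Rightarrow> 'n \<Rightarrow> 'n \<Rightarrow> 'n \<Rightarrow> real" where
  "rotate3 T a b c = (\<Sum>i\<in>UNIV. \<Sum>j\<in>UNIV. \<Sum>k\<in>UNIV. E a i * E b j * E c k * T i j k)"

lemma rotate3_swap12:
  assumes "\<And>i j k. T i j k = T j i k"
  shows "rotate3 T a b c = rotate3 T b a c"
  unfolding rotate3_def by (subst sum.swap) (simp add: assms[of _ _] mult_ac cong: sum.cong)

lemma rotate3_swap23:
  assumes "\<And>i j k. T i j k = T i k j"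
  shows "rotate3 T a b c = rotate3 T a c b"
  unfolding rotate3_def by (subst (2) sum.swap) (simp add: assms[of _ _] mult_ac cong: sum.cong)

lemma sum_sq_rotate3:
  "(\<Sum>a\<in>UNIV. \<Sum>b\<in>UNIV. \<Sum>c\<in>UNIV. (rotate3 T a b c)^2) = (\<Sum>i\<in>UNIV. \<Sum>j\<in>UNIV. \<Sum>k\<in>UNIV. (T i j k)^2)"
proof -
  define Y where "Y i j c = (\<Sum>k\<in>UNIV. E c k * T i j k)" for i j c
  define X where "X i b c = (\<Sum>j\<in>UNIV. E b j * Y i j c)" for i b c
  have rot: "rotate3 T a b c = (\<Sum>i\<in>UNIV. E a i * X i b c)" for a b c
    unfolding rotate3_def X_def Y_def by (simp add: sum_distrib_left mult_ac)
  have "(\<Sum>a\<in>UNIV. \<Sum>b\<in>UNIV. \<Sum>c\<in>UNIV. (rotate3 T a b c)^2) = (\<Sum>b\<in>UNIV. \<Sum>c\<in>UNIV. \<Sum>a\<in>UNIV. (rotate3 T a b c)^2)"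
    by (rule sum_move_outer_inside2)
  also have "\<dots> = (\<Sum>b\<in>UNIV. \<Sum>c\<in>UNIV. \<Sum>i\<in>UNIV. (X i b c)^2)"
    unfolding rot by (simp only: sum_sq_coords)
  also have "\<dots> = (\<Sum>i\<in>UNIV. \<Sum>b\<in>UNIV. \<Sum>c\<in>UNIV. (X i b c)^2)"
    by (rule sum_move_inner_outside3)
  also have "\<dots> = (\<Sum>i\<in>UNIV. \<Sum>c\<in>UNIV. \<Sum>b\<in>UNIV. (X i b c)^2)"
    by (rule sum.cong[OF refl sum.swap])
  also have "\<dots> = (\<Sum>i\<in>UNIV. \<Sum>c\<in>UNIV. \<Sum>j\<in>UNIV. (Y i j c)^2)"
    unfolding X_def by (simp only: sum_sq_coords)
  also have "\<dots> = (\<Sum>i\<in>UNIV. \<Sum>j\<in>UNIV. \<Sum>c\<in>UNIV. (Y i j c)^2)"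
    by (rule sum.cong[OF refl sum.swap])
  also have "\<dots> = (\<Sum>i\<in>UNIV. \<Sum>j\<in>UNIV. \<Sum>k\<in>UNIV. (T i j k)^2)"
    unfolding Y_def by (simp only: sum_sq_coords)
  finally show ?thesis .
qed

lemma weighted_trace_rotate3:
  "(\<Sum>a\<in>UNIV. w a * rotate3 T a a c)
     = (\<Sum>k\<in>UNIV. E c k * (\<Sum>i\<in>UNIV. \<Sum>j\<in>UNIV. (\<Sum>a\<in>UNIV. w a * E a i * E a j) * T i j k))"
proof -
  have "(\<Sum>a\<in>UNIV. w a * rotate3 T a a c)
      = (\<Sum>a\<in>UNIV. \<Sum>i\<in>UNIV. \<Sum>j\<in>UNIV. \<Sum>k\<in>UNIV. E c k * (w a * E a i * E a j * T i j k))"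
    unfolding rotate3_def by (simp add: sum_distrib_left mult_ac)
  also have "\<dots> = (\<Sum>i\<in>UNIV. \<Sum>j\<in>UNIV. \<Sum>k\<in>UNIV. \<Sum>a\<in>UNIV. E c k * (w a * E a i * E a j * T i j k))"
    by (rule sum_move_outer_inside3)
  also have "\<dots> = (\<Sum>i\<in>UNIV. \<Sum>j\<in>UNIV. \<Sum>k\<in>UNIV. E c k * ((\<Sum>a\<in>UNIV. w a * E a i * E a j) * T i j k))"
    by (simp add: sum_distrib_left sum_distrib_right mult_ac)
  also have "\<dots> = (\<Sum>k\<in>UNIV. E c k * (\<Sum>i\<in>UNIV. \<Sum>j\<in>UNIV. (\<Sum>a\<in>UNIV. w a * E a i * E a j) * T i j k))"
    by (subst sum_move_inner_outside3) (simp add: sum_distrib_left)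
  finally show ?thesis .
qed

lemma trace_rotate3: "(\<Sum>a\<in>UNIV. rotate3 T a a c) = (\<Sum>k\<in>UNIV. E c k * (\<Sum>i\<in>UNIV. T i i k))"
  using weighted_trace_rotate3[of "\<lambda>_. 1" T c] by (simp add: cols)

lemma weighted_trace_rotate3_eq_zero:
  assumes "\<And>k. (\<Sum>i\<in>UNIV. \<Sum>j\<in>UNIV. (S * (if i = j then 1 else 0) - diag l i j) * T i j k) = 0"
  shows "(\<Sum>a\<in>UNIV. (S - l a) * rotate3 T a a c) = 0"
proof -
  have "(\<Sum>a\<in>UNIV. (S - l a) * E a i * E a j) = S * (if i = j then 1 else 0) - diag l i j" for i j
    by (simp add: diag_def left_diff_distrib sum_subtractf sum_distrib_left[symmetric] mult.assoc cols)
  then show ?thesis unfolding weighted_trace_rotate3 using assms by simp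
qed

end

section \<open>The scalar inequality\<close>

text \<open>The polynomial whose nonnegativity on \<open>[0, \<Delta>u - \<lambda>\<^sub>m\<^sub>i\<^sub>n]\<close> drives the estimate; see
  \<open>slack_poly_identity\<close>.\<close>
definition slack_poly :: "real \<Rightarrow> real \<Rightarrow> real \<Rightarrow> real \<Rightarrow> real" where
  "slack_poly n S e x = -3*(n-1)*(1+e)*S^2 + 6*S*x + (S+(1+e)*x)*(4*(n-1)*S - 2*n*x)"

lemma slack_poly_identity:
  "(S+(1+e)*x)*((n-1)*S+2*x)^2 - ((n+2)*(S+(1+e)*x) - 3*S)*((n-1)*S^2 + 2*x^2) = x * slack_poly n S e x"
  unfolding slack_poly_def by algebra

lemma slack_poly_at_zero: "slack_poly n S e 0 = (n-1)*S^2*(1 - 3*e)"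
  unfolding slack_poly_def by algebra

text \<open>The polynomial is concave in \<open>x\<close>, so nonnegativity at the endpoints suffices.\<close>
lemma slack_poly_nonneg_between:
  fixes n S e x X :: real
  assumes "n \<ge> 0" "e \<ge> 0" "0 \<le> x" "x \<le> X" "slack_poly n S e 0 \<ge> 0" "slack_poly n S e X \<ge> 0"
  shows "slack_poly n S e x \<ge> 0"
proof -
  have "X * slack_poly n S e x
      = (X - x) * slack_poly n S e 0 + x * slack_poly n S e X + 2*n*(1+e)*x*X*(X-x)"
    unfolding slack_poly_def by algebra
  also have "\<dots> \<ge> 0" using assms by simp
  finally have X: "X * slack_poly n S e x \<ge> 0" .
  show ?thesis
  proof (cases "X = 0")
    case True
    then show ?thesis using assms by simp
  next
    case False
    then show ?thesis using X assms by (simp add: zero_le_mult_iff)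
  qed
qed

lemma slack_poly_dim4:
  fixes S \<mu> e :: real
  assumes S: "S > 0" and \<mu>: "-S/2 < \<mu>" "\<mu> \<le> S/4" and e: "e = 2/9*(1/2 + \<mu>/S)"
  shows "0 < e" "slack_poly 4 S e 0 \<ge> 0" "slack_poly 4 S e (S - \<mu>) \<ge> 0"
proof -
  have he: "9*e*S = S + 2*\<mu>" using e S by (simp add: field_simps)
  then have "9*e*S > 0" using \<mu> by simp
  then show e0: "0 < e" using S by (simp add: zero_less_mult_iff)
  have "9*e*S \<le> 3/2*S" using he \<mu> by simp
  then have e1: "e \<le> 1/6" using S by simp
  then show "slack_poly 4 S e 0 \<ge> 0" by (simp add: slack_poly_at_zero)
  have "slack_poly 4 S e (S - \<mu>) = 18*e*(1+e)*(3-9*e)*S^2"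
    unfolding slack_poly_def using he by algebra
  then show "slack_poly 4 S e (S - \<mu>) \<ge> 0" using e0 e1 by simp
qed

text \<open>Here \<open>s = sqrt (3n\<^sup>2 + 1)\<close> and \<open>Z = 2n(\<lambda>\<^sub>m\<^sub>i\<^sub>n/\<Delta>u) + s - (n - 1)\<close>; the value of the
  polynomial at the right endpoint factors as below, and the bracket is decreasing in \<open>Z\<close>
  on the admissible range \<open>[0, s - n + 3]\<close>.\<close>
lemma slack_poly_dim_ge5_endpoint:
  fixes n s S Z e x :: real
  assumes n: "n \<ge> 5" and s: "s^2 = 3*n^2+1" "s \<ge> n + 1" and Z: "0 \<le> Z" "Z \<le> s - n + 3"
    and e: "6*n*(n-1)*e = (s-n-1)*Z" and x: "2*n*x = S*(n+1+s-Z)"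
  shows "slack_poly n S e x \<ge> 0"
proof -
  define h where "h = (n-1)*(4*n*(3*n-1) + 4*n* s + 2*Z*(n+2-2* s)) - Z^2*(s-n-1)"
  have "12*n^2*(n-1) * slack_poly n S e x = S^2 * Z * h"
    unfolding h_def slack_poly_def using s(1) e x by algebra
  moreover have "h \<ge> 0"
  proof -
    have "2*(n-1)*(2* s-n-2)*Z \<le> 2*(n-1)*(2* s-n-2)*(s-n+3)"
      using Z s n by (intro mult_left_mono) auto
    moreover have "(s-n-1)*Z^2 \<le> (s-n-1)*(s-n+3)^2"
      using Z s by (intro mult_left_mono power_mono) auto
    ultimately have "h \<ge> (n-1)*(4*n*(3*n-1) + 4*n* s) - 2*(n-1)*(2* s-n-2)*(s-n+3) - (s-n-1)*(s-n+3)^2"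
      unfolding h_def by (simp add: algebra_simps)
    also have "(n-1)*(4*n*(3*n-1) + 4*n * s) - 2*(n-1)*(2 * s-n-2)*(s-n+3) - (s-n-1)*(s-n+3)^2
        = 4*(n-1)^2*(2*n-1+s)" using s(1) by algebra
    finally show ?thesis using n s by (smt (verit) zero_le_mult_iff zero_le_power2)
  qed
  ultimately have "12*n^2*(n-1) * slack_poly n S e x \<ge> 0" using Z by simp
  moreover have "12*n^2*(n-1) > 0" using n by simp
  ultimately show ?thesis by (simp add: zero_le_mult_iff)
qed

lemma slack_poly_dim_ge5:
  fixes n S \<mu> e s :: real
  assumes n: "n \<ge> 5" and s: "s = sqrt (3*n^2+1)" and S: "S > 0"
    and \<mu>: "\<mu>/S \<ge> - (s - (n-1))/(2*n)" "\<mu> \<le> S/n"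
    and e: "e = (s - (n+1))/(3*(n-1)) * ((s - (n-1))/(2*n) + \<mu>/S)"
  shows "0 \<le> e" "slack_poly n S e 0 \<ge> 0" "slack_poly n S e (S - \<mu>) \<ge> 0"
proof -
  have s2: "s^2 = 3*n^2+1" using s by simp
  have "(n+1)^2 \<le> s^2" using s2 n by (simp add: power2_eq_square algebra_simps)
  then have sn: "s \<ge> n + 1" using s by (simp add: real_le_rsqrt)
  define Z where "Z = 2*n*((s - (n-1))/(2*n) + \<mu>/S)"
  have "(s - (n-1))/(2*n) + \<mu>/S \<ge> 0"
    using \<mu>(1) minus_divide_left[of "s - (n-1)" "2*n"] by linarith
  then have Z0: "Z \<ge> 0" using n unfolding Z_def by simp
  have "n*(\<mu>/S) \<le> 1" using \<mu>(2) S n by (simp add: field_simps)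
  moreover have "Z = s - n + 1 + 2*(n*(\<mu>/S))" unfolding Z_def using n by (simp add: field_simps)
  ultimately have Z1: "Z \<le> s - n + 3" by linarith
  have he: "6*n*(n-1)*e = (s-n-1)*Z" using n unfolding e Z_def by (simp add: field_simps)
  have "(6*n*(n-1))*e \<ge> 0" using he sn Z0 by simp
  moreover have "6*n*(n-1) > 0" using n by simp
  ultimately show "0 \<le> e" by (simp add: zero_le_mult_iff)
  have "(s-n-1)*Z \<le> (s-n-1)*(s-n+3)" using Z1 sn by (simp add: mult_left_mono)
  also have "\<dots> = 2*n*(n-1) - 2*(n-1)*(s-n-1)" using s2 by algebra
  also have "\<dots> \<le> 2*n*(n-1)" using sn n by simp
  finally have "(2*n*(n-1))*(3*e) \<le> (2*n*(n-1))*1" using he by (simp add: algebra_simps)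
  moreover have "2*n*(n-1) > 0" using n by simp
  ultimately have "3*e \<le> 1" using mult_le_cancel_left_pos by blast
  then have "e \<le> 1/3" by simp
  then show "slack_poly n S e 0 \<ge> 0" using n by (simp add: slack_poly_at_zero)
  have "2*n*(S - \<mu>) = S*(n+1+s-Z)" using n S unfolding Z_def by (simp add: field_simps)
  then show "slack_poly n S e (S - \<mu>) \<ge> 0"
    using slack_poly_dim_ge5_endpoint[OF n s2 sn Z0 Z1 he] by simp
qed

lemma weighted_Cauchy_Schwarz:
  fixes t p w :: "'n::finite \<Rightarrow> real"
  assumes w: "\<And>a. w a > 0"
  shows "(\<Sum>a\<in>UNIV. p a * t a)^2 \<le> (\<Sum>a\<in>UNIV. w a * (t a)^2) * (\<Sum>a\<in>UNIV. (p a)^2 / w a)"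
proof -
  have "(\<Sum>a\<in>UNIV. (sqrt (w a) * t a) * (p a / sqrt (w a)))^2
     \<le> (\<Sum>a\<in>UNIV. (sqrt (w a) * t a)^2) * (\<Sum>a\<in>UNIV. (p a / sqrt (w a))^2)"
    by (rule Cauchy_Schwarz_ineq_sum)
  moreover have "(sqrt (w a) * t a) * (p a / sqrt (w a)) = p a * t a"
    and "(sqrt (w a) * t a)^2 = w a * (t a)^2" and "(p a / sqrt (w a))^2 = (p a)^2 / w a" for a
    using w[of a] by (simp_all add: field_simps power_mult_distrib power_divide)
  ultimately show ?thesis by simp
qed

text \<open>Test against \<open>p\<^sub>a = C - B F\<^sub>a\<close>, which is orthogonal to the constraint direction.\<close>
lemma constrained_weighted_Cauchy_Schwarz:
  fixes t F w :: "'n::finite \<Rightarrow> real"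
  assumes w: "\<And>a. w a > 0" and con: "(\<Sum>a\<in>UNIV. F a * t a) = 0"
  defines "A \<equiv> \<Sum>a\<in>UNIV. 1 / w a" and "B \<equiv> \<Sum>a\<in>UNIV. F a / w a" and "C \<equiv> \<Sum>a\<in>UNIV. (F a)^2 / w a"
  shows "(C * (\<Sum>a\<in>UNIV. t a))^2 \<le> (\<Sum>a\<in>UNIV. w a * (t a)^2) * (C * (A*C - B^2))"
proof -
  define p where "p a = C - B * F a" for a
  have "(\<Sum>a\<in>UNIV. p a * t a) = C * (\<Sum>a\<in>UNIV. t a) - B * (\<Sum>a\<in>UNIV. F a * t a)"
    unfolding p_def by (simp add: algebra_simps sum_subtractf sum_distrib_left)
  then have "(\<Sum>a\<in>UNIV. p a * t a) = C * (\<Sum>a\<in>UNIV. t a)" using con by simp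
  moreover have "(\<Sum>a\<in>UNIV. (p a)^2 / w a) = C * (A*C - B^2)"
  proof -
    have "(p a)^2 / w a = C^2 * (1 / w a) - 2*C*B * (F a / w a) + B^2 * ((F a)^2 / w a)" for a
      unfolding p_def by (simp add: power2_eq_square algebra_simps diff_divide_distrib add_divide_distrib)
    then have "(\<Sum>a\<in>UNIV. (p a)^2 / w a) = C^2 * A - 2*C*B*B + B^2 * C"
      unfolding A_def B_def C_def by (simp add: sum.distrib sum_subtractf sum_distrib_left)
    then show ?thesis by (simp add: power2_eq_square algebra_simps)
  qed
  ultimately show ?thesis using weighted_Cauchy_Schwarz[of w p t, OF w] by simp
qed

lemma sum_divide_weight_1_3:
  fixes g :: "'n::finite \<Rightarrow> real"
  shows "(\<Sum>a\<in>UNIV. g a / (if a = c then 1 else 3)) = ((\<Sum>a\<in>UNIV. g a) + 2 * g c) / 3"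
proof -
  have "(\<Sum>a\<in>UNIV. g a / (if a = c then 1 else 3)) = (\<Sum>a\<in>UNIV. g a / 3 + (if a = c then 2 * g a / 3 else 0))"
    by (rule sum.cong) auto
  also have "\<dots> = (\<Sum>a\<in>UNIV. g a) / 3 + 2 * g c / 3"
    by (simp add: sum.distrib sum_divide_distrib)
  finally show ?thesis by simp
qed

lemma slack_poly_weighted_bound:
  fixes n S e x Q :: real
  assumes n: "n \<ge> 1" and S: "S > 0" and e: "e \<ge> 0" and x: "x > 0"
    and Q: "Q \<le> (n-1)*S^2" and slack: "slack_poly n S e x \<ge> 0"
  shows "(1 + (1+e)*x/S) * ((n+2)*(Q + 2*x^2) - ((n-1)*S + 2*x)^2) \<le> 3*(Q + 2*x^2)"
proof -
  define K where "K = 1 + (1+e)*x/S"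
  have SK: "S*K = S + (1+e)*x" using S unfolding K_def by (simp add: field_simps)
  have "3 * S \<le> (n+2)*(S+(1+e)*x)"
    using mult_mono[of 3 "n+2" S "S+(1+e)*x"] n S e x by simp
  then have "((n+2)*(S+(1+e)*x) - 3*S)*(Q + 2*x^2) \<le> ((n+2)*(S+(1+e)*x) - 3*S)*((n-1)*S^2 + 2*x^2)"
    using Q by (simp add: mult_left_mono)
  moreover have "x * slack_poly n S e x \<ge> 0" using slack x by simp
  moreover have "S * (3*(Q + 2*x^2) - K*((n+2)*(Q + 2*x^2) - ((n-1)*S + 2*x)^2))
      = (S+(1+e)*x)*((n-1)*S+2*x)^2 - ((n+2)*(S+(1+e)*x) - 3*S)*(Q + 2*x^2)"
  proof -
    have "S * (3*(Q + 2*x^2) - K*((n+2)*(Q + 2*x^2) - ((n-1)*S + 2*x)^2))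
        = 3*S*(Q + 2*x^2) - (S*K)*((n+2)*(Q + 2*x^2) - ((n-1)*S + 2*x)^2)"
      by (simp add: algebra_simps)
    also have "\<dots> = (S+(1+e)*x)*((n-1)*S+2*x)^2 - ((n+2)*(S+(1+e)*x) - 3*S)*(Q + 2*x^2)"
      unfolding SK by algebra
    finally show ?thesis .
  qed
  ultimately have "S * (3*(Q + 2*x^2) - K*((n+2)*(Q + 2*x^2) - ((n-1)*S + 2*x)^2)) \<ge> 0"
    using slack_poly_identity[of S e x n] by linarith
  then show ?thesis using S unfolding K_def by (simp add: zero_le_mult_iff)
qed

text \<open>The estimate for one eigen-direction \<open>c\<close>: \<open>t\<close> are the diagonal entries \<open>T\<^sub>a\<^sub>a\<^sub>c\<close>, \<open>F\<close> the
  eigenvalues \<open>S - \<lambda>\<^sub>a\<close> of the linearized operator, and the constraint is the differentiated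
  equation.  The weighted Cauchy-Schwarz inequality reduces the claim to
  \<open>slack_poly_weighted_bound\<close>.\<close>
lemma diagonal_component_bound:
  fixes t F :: "'n::finite \<Rightarrow> real" and c :: 'n
  assumes con: "(\<Sum>a\<in>UNIV. F a * t a) = 0" and n: "n = real CARD('n)" and S: "S > 0"
    and sF: "(\<Sum>a\<in>UNIV. F a) = (n-1)*S" and sQ: "(\<Sum>a\<in>UNIV. (F a)^2) \<le> (n-1)*S^2"
    and x: "F c > 0" and e: "e \<ge> 0" and slack: "slack_poly n S e (F c) \<ge> 0"
  shows "(1 + (1+e)*F c/S) * (\<Sum>a\<in>UNIV. t a)^2 \<le> (\<Sum>a\<in>UNIV. (if a = c then 1 else 3) * (t a)^2)"
proof -
  define w where "w a = (if a = c then 1 else (3::real))" for a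
  define A where "A = (\<Sum>a\<in>UNIV. 1 / w a)"
  define B where "B = (\<Sum>a\<in>UNIV. F a / w a)"
  define C where "C = (\<Sum>a\<in>UNIV. (F a)^2 / w a)"
  define K where "K = 1 + (1+e)*F c/S"
  define W where "W = (\<Sum>a\<in>UNIV. w a * (t a)^2)"
  define v where "v = (\<Sum>a\<in>UNIV. t a)"
  have w: "\<And>a. w a > 0" unfolding w_def by simp
  have n1: "n \<ge> 1" using n by simp
  have A: "3 * A = n + 2" unfolding A_def w_def using sum_divide_weight_1_3[of "\<lambda>a. 1" c] n by simp
  have B: "3 * B = (n-1)*S + 2 * F c" unfolding B_def w_def using sum_divide_weight_1_3[of F c] sF by simp
  have C: "3 * C = (\<Sum>a\<in>UNIV. (F a)^2) + 2 * (F c)^2"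
    unfolding C_def w_def using sum_divide_weight_1_3[of "\<lambda>a. (F a)^2" c] by simp
  have "(\<Sum>a\<in>UNIV. (F a)^2) \<ge> 0" by (simp add: sum_nonneg)
  moreover have "(F c)^2 > 0" using x by simp
  ultimately have C0: "C > 0" using C by linarith
  have W0: "W \<ge> 0" unfolding W_def using w by (simp add: sum_nonneg less_imp_le)
  have "(C * v)^2 \<le> W * (C * (A*C - B^2))"
    using constrained_weighted_Cauchy_Schwarz[OF w con] unfolding A_def B_def C_def W_def v_def .
  then have "C * (C * v^2) \<le> C * (W * (A*C - B^2))"
    by (simp add: power_mult_distrib power2_eq_square mult_ac)
  then have cs: "C * v^2 \<le> W * (A*C - B^2)" using C0 by simp
  have "K * ((3*A) * (3*C) - (3*B)^2) \<le> 3 * (3 * C)"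
    using slack_poly_weighted_bound[OF n1 S e x sQ slack] unfolding A B C K_def by simp
  moreover have "(3*A) * (3*C) - (3*B)^2 = 9 * (A*C - B^2)" by (simp add: algebra_simps power2_eq_square)
  ultimately have "9 * (K * (A*C - B^2)) \<le> 9 * C" by (simp add: mult.left_commute)
  then have KD: "K * (A*C - B^2) \<le> C" by simp
  have "K * v^2 \<le> W"
  proof (cases "A*C - B^2 > 0")
    case True
    have "(A*C - B^2) * (K * v^2) = (K * (A*C - B^2)) * v^2" by (simp add: mult_ac)
    also have "\<dots> \<le> C * v^2" using KD by (simp add: mult_right_mono)
    also have "\<dots> \<le> (A*C - B^2) * W" using cs by (simp add: mult.commute)
    finally show ?thesis using True by simp
  next
    case False
    then have "W * (A*C - B^2) \<le> 0" using W0 by (simp add: mult_nonneg_nonpos)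
    then have "C * v^2 \<le> 0" using cs by linarith
    then have "v = 0" using C0 by (simp add: mult_le_0_iff)
    then show ?thesis using W0 by simp
  qed
  then show ?thesis unfolding K_def W_def w_def v_def by simp
qed

lemma sum_sq_symmetric_tensor_ge:
  fixes T :: "'n::finite \<Rightarrow> 'n \<Rightarrow> 'n \<Rightarrow> real"
  assumes s1: "\<And>a b c. T a b c = T b a c" and s2: "\<And>a b c. T a b c = T a c b"
  shows "(\<Sum>c\<in>UNIV. \<Sum>a\<in>UNIV. (if a = c then 1 else 3) * (T a a c)^2)
    \<le> (\<Sum>a\<in>UNIV. \<Sum>b\<in>UNIV. \<Sum>c\<in>UNIV. (T a b c)^2)"
proof -
  text \<open>\<open>ind a b c\<close> is \<open>1\<close> if at least two of the indices coincide and \<open>0\<close> otherwise;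
    by symmetry every such entry equals some \<open>T a a c\<close>.\<close>
  define ind where "ind a b c = (if a = b then 1 else 0) + (if a = c then 1 else 0)
    + (if b = c then 1 else 0) - (if a = b \<and> b = c then 2 else (0::real))" for a b c :: 'n
  have "(\<Sum>a\<in>UNIV. \<Sum>b\<in>UNIV. \<Sum>c\<in>UNIV. ind a b c * (T a b c)^2)
      \<le> (\<Sum>a\<in>UNIV. \<Sum>b\<in>UNIV. \<Sum>c\<in>UNIV. (T a b c)^2)"
  proof (intro sum_mono)
    fix a b c
    have "ind a b c \<le> 1" unfolding ind_def by auto
    then show "ind a b c * (T a b c)^2 \<le> (T a b c)^2"
      using mult_right_mono[of "ind a b c" 1 "(T a b c)^2"] by simp
  qed
  moreover have "ind a b c * (T a b c)^2 = (if a = b then (T a a c)^2 else 0) + (if a = c then (T a a b)^2 else 0)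
      + (if b = c then (T b b a)^2 else 0) - (if a = b \<and> b = c then 2 * (T a a a)^2 else 0)" for a b c
    using s1[of a b b] s2[of a b a] s2[of b a b] unfolding ind_def by auto
  moreover have "(\<Sum>b\<in>UNIV. \<Sum>c\<in>UNIV. if a = b then (T a a c)^2 else 0) = (\<Sum>c\<in>UNIV. (T a a c)^2)"
    and "(\<Sum>b\<in>UNIV. \<Sum>c\<in>UNIV. if a = b \<and> b = c then 2 * (T a a a)^2 else 0) = 2 * (T a a a)^2" for a
  proof -
    have "(\<Sum>b\<in>UNIV. \<Sum>c\<in>UNIV. if a = b then (T a a c)^2 else 0)
        = (\<Sum>b\<in>UNIV. if a = b then (\<Sum>c\<in>UNIV. (T a a c)^2) else 0)"
      and "(\<Sum>b\<in>UNIV. \<Sum>c\<in>UNIV. if a = b \<and> b = c then 2 * (T a a a)^2 else 0)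
        = (\<Sum>b\<in>UNIV. if a = b then 2 * (T a a a)^2 else 0)"
      by (rule sum.cong; simp)+
    then show "(\<Sum>b\<in>UNIV. \<Sum>c\<in>UNIV. if a = b then (T a a c)^2 else 0) = (\<Sum>c\<in>UNIV. (T a a c)^2)"
      and "(\<Sum>b\<in>UNIV. \<Sum>c\<in>UNIV. if a = b \<and> b = c then 2 * (T a a a)^2 else 0) = 2 * (T a a a)^2"
      by simp_all
  qed
  moreover have swap: "(\<Sum>a\<in>UNIV. \<Sum>b\<in>UNIV. (T b b a)^2) = (\<Sum>a\<in>UNIV. \<Sum>c\<in>UNIV. (T a a c)^2)"
    by (rule sum.swap)
  ultimately have bound: "3 * (\<Sum>a\<in>UNIV. \<Sum>c\<in>UNIV. (T a a c)^2) - 2 * (\<Sum>a\<in>UNIV. (T a a a)^2)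
      \<le> (\<Sum>a\<in>UNIV. \<Sum>b\<in>UNIV. \<Sum>c\<in>UNIV. (T a b c)^2)"
    by (simp add: sum.distrib sum_subtractf sum_distrib_left[symmetric])
  have "(\<Sum>a\<in>UNIV. (if a = c then 1 else 3) * (T a a c)^2) = (\<Sum>a\<in>UNIV. 3 * (T a a c)^2 - (if a = c then 2 * (T c c c)^2 else 0))" for c
    by (rule sum.cong) auto
  then have "(\<Sum>c\<in>UNIV. \<Sum>a\<in>UNIV. (if a = c then 1 else 3) * (T a a c)^2)
      = 3 * (\<Sum>c\<in>UNIV. \<Sum>a\<in>UNIV. (T a a c)^2) - 2 * (\<Sum>c\<in>UNIV. (T c c c)^2)"
    by (simp add: sum_subtractf sum_distrib_left)
  then show ?thesis using bound swap by linarith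
qed

section \<open>The estimate\<close>

lemma eigenvalue_lt_trace:
  fixes l :: "'n::finite \<Rightarrow> real"
  assumes "S = (\<Sum>a\<in>UNIV. l a)" "S > 0" and sq: "(\<Sum>a\<in>UNIV. (l a)^2) < S^2"
  shows "l c < S"
proof -
  have "(l c)^2 \<le> (\<Sum>a\<in>UNIV. (l a)^2)" by (rule member_le_sum) auto
  then have "(l c)^2 < S^2" using sq by linarith
  then show ?thesis using power2_less_imp_less[of "l c" S] assms(2) by simp
qed

lemma sum_eigenvalue_gaps:
  fixes l :: "'n::finite \<Rightarrow> real"
  assumes S: "S = (\<Sum>a\<in>UNIV. l a)" and sq: "(\<Sum>a\<in>UNIV. (l a)^2) < S^2"
  shows "(\<Sum>a\<in>UNIV. S - l a) = (real CARD('n) - 1)*S"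
    and "(\<Sum>a\<in>UNIV. (S - l a)^2) \<le> (real CARD('n) - 1)*S^2"
proof -
  show "(\<Sum>a\<in>UNIV. S - l a) = (real CARD('n) - 1)*S"
    using S by (simp add: sum_subtractf algebra_simps)
  have "(\<Sum>a\<in>UNIV. (S - l a)^2) = (\<Sum>a\<in>UNIV. S^2 - 2*S*l a + (l a)^2)"
    by (simp add: power2_eq_square algebra_simps)
  also have "\<dots> = real CARD('n)*S^2 - 2*S*S + (\<Sum>a\<in>UNIV. (l a)^2)"
    using S[symmetric] by (simp add: sum.distrib sum_subtractf sum_distrib_left[symmetric])
  finally show "(\<Sum>a\<in>UNIV. (S - l a)^2) \<le> (real CARD('n) - 1)*S^2"
    using sq by (simp add: power2_eq_square algebra_simps)
qed

text \<open>The core inequality in an eigenframe of \<open>D\<^sup>2u\<close>: \<open>l\<close> are the eigenvalues, \<open>T\<close> the third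
  derivatives, and \<open>con\<close> the differentiated equation.\<close>
lemma eigenframe_tensor_inequality:
  fixes l :: "'n::finite \<Rightarrow> real" and T :: "'n \<Rightarrow> 'n \<Rightarrow> 'n \<Rightarrow> real"
  assumes n: "n = real CARD('n)" and S: "S = (\<Sum>a\<in>UNIV. l a)" "S > 0" and sq: "(\<Sum>a\<in>UNIV. (l a)^2) < S^2"
    and e: "e \<ge> 0" and slack: "slack_poly n S e 0 \<ge> 0" "slack_poly n S e (S - Min (range l)) \<ge> 0"
    and s1: "\<And>a b c. T a b c = T b a c" and s2: "\<And>a b c. T a b c = T a c b"
    and con: "\<And>c. (\<Sum>a\<in>UNIV. (S - l a) * T a a c) = 0"
  shows "(1+e)/S * (\<Sum>c\<in>UNIV. (S - l c) * (\<Sum>a\<in>UNIV. T a a c)^2)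
    \<le> (\<Sum>a\<in>UNIV. \<Sum>b\<in>UNIV. \<Sum>c\<in>UNIV. (T a b c)^2) - (\<Sum>c\<in>UNIV. (\<Sum>a\<in>UNIV. T a a c)^2)"
proof -
  note lS = eigenvalue_lt_trace[OF S sq] and gaps = sum_eigenvalue_gaps[OF S(1) sq]
  have sF: "(\<Sum>a\<in>UNIV. S - l a) = (n-1)*S" and sQ: "(\<Sum>a\<in>UNIV. (S - l a)^2) \<le> (n-1)*S^2"
    using gaps n by simp_all
  have "(1 + (1+e)*(S - l c)/S) * (\<Sum>a\<in>UNIV. T a a c)^2
      \<le> (\<Sum>a\<in>UNIV. (if a = c then 1 else 3) * (T a a c)^2)" for c
  proof -
    have "Min (range l) \<le> l c" by (rule Min_le) auto
    then have "slack_poly n S e (S - l c) \<ge> 0"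
      using slack_poly_nonneg_between[of n e "S - l c" "S - Min (range l)" S] n e lS[of c] slack by simp
    moreover have "S - l c > 0" using lS[of c] by simp
    ultimately show ?thesis
      using diagonal_component_bound[where F="\<lambda>a. S - l a" and t="\<lambda>a. T a a c", OF con n S(2) sF sQ _ e]
      by simp
  qed
  then have "(\<Sum>c\<in>UNIV. (1 + (1+e)*(S - l c)/S) * (\<Sum>a\<in>UNIV. T a a c)^2)
      \<le> (\<Sum>c\<in>UNIV. \<Sum>a\<in>UNIV. (if a = c then 1 else 3) * (T a a c)^2)"
    by (rule sum_mono)
  also have "\<dots> \<le> (\<Sum>a\<in>UNIV. \<Sum>b\<in>UNIV. \<Sum>c\<in>UNIV. (T a b c)^2)"
    by (rule sum_sq_symmetric_tensor_ge[OF s1 s2])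
  finally have "(\<Sum>c\<in>UNIV. (1 + (1+e)*(S - l c)/S) * (\<Sum>a\<in>UNIV. T a a c)^2)
      \<le> (\<Sum>a\<in>UNIV. \<Sum>b\<in>UNIV. \<Sum>c\<in>UNIV. (T a b c)^2)" .
  moreover have "(\<Sum>c\<in>UNIV. (1 + (1+e)*(S - l c)/S) * (\<Sum>a\<in>UNIV. T a a c)^2)
     = (\<Sum>c\<in>UNIV. (\<Sum>a\<in>UNIV. T a a c)^2) + (1+e)/S * (\<Sum>c\<in>UNIV. (S - l c) * (\<Sum>a\<in>UNIV. T a a c)^2)"
  proof -
    have "(1 + (1+e)*(S - l c)/S) * V = V + (1+e)/S * ((S - l c) * V)" for c and V :: real
      using S(2) by (simp add: field_simps)
    then show ?thesis by (simp only: sum.distrib sum_distrib_left)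
  qed
  ultimately show ?thesis by linarith
qed

lemma symmetric_matrix_eigenframe:
  fixes H :: "real^'n^'n"
  assumes sym: "\<And>i j. H$i$j = H$j$i"
  obtains E l where "orthonormal_frame E" "\<And>i j. H$i$j = orthonormal_frame.diag E l i j"
    "lambda_min H = Min (range l)"
proof -
  obtain E :: "'n \<Rightarrow> 'n \<Rightarrow> real" and l :: "'n \<Rightarrow> real"
    where rows: "\<And>a b. (\<Sum>i\<in>UNIV. E a i * E b i) = (if a = b then 1 else 0)"
    and cols: "\<And>i j. (\<Sum>a\<in>UNIV. E a i * E a j) = (if i = j then 1 else 0)"
    and H: "\<And>i j. H$i$j = (\<Sum>a\<in>UNIV. l a * E a i * E a j)" and lmin: "lambda_min H = Min (range l)"
    using symmetric_matrix_diagonalization[OF sym] by blast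
  have frame: "orthonormal_frame E" by unfold_locales (fact rows, fact cols)
  show thesis
    by (rule that[OF frame _ lmin]) (simp add: H orthonormal_frame.diag_def[OF frame])
qed

lemma symmetric_sigma2_pos_eigenvalues:
  fixes H :: "real^'n^'n"
  assumes sym: "\<And>i j. H$i$j = H$j$i" and frame: "orthonormal_frame E"
    and H: "\<And>i j. H$i$j = orthonormal_frame.diag E l i j" and sigma2: "sigma2 H > 0"
  shows "(\<Sum>i\<in>UNIV. H$i$i) = (\<Sum>a\<in>UNIV. l a)" "(\<Sum>a\<in>UNIV. (l a)^2) < (\<Sum>a\<in>UNIV. l a)^2"
proof -
  interpret orthonormal_frame E by (rule frame)
  show tr: "(\<Sum>i\<in>UNIV. H$i$i) = (\<Sum>a\<in>UNIV. l a)" by (simp add: H trace_diag)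
  have "(\<Sum>i\<in>UNIV. \<Sum>j\<in>UNIV. (H$i$j)^2) = (\<Sum>a\<in>UNIV. (l a)^2)" by (simp add: H sum_sq_diag)
  then show "(\<Sum>a\<in>UNIV. (l a)^2) < (\<Sum>a\<in>UNIV. l a)^2"
    using sigma2 sigma2_symmetric[OF sym] tr by simp
qed

lemma lambda_min_le_mean:
  fixes H :: "real^'n^'n"
  assumes sym: "\<And>i j. H$i$j = H$j$i"
  shows "lambda_min H \<le> (\<Sum>i\<in>UNIV. H$i$i) / real CARD('n)"
proof -
  obtain E l where frame: "orthonormal_frame E" and H: "\<And>i j. H$i$j = orthonormal_frame.diag E l i j"
    and lmin: "lambda_min H = Min (range l)"
    using symmetric_matrix_eigenframe[OF sym] by blast
  interpret orthonormal_frame E by (rule frame)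
  have "(\<Sum>a\<in>(UNIV::'n set). Min (range l)) \<le> (\<Sum>a\<in>UNIV. l a)"
    by (intro sum_mono Min_le) auto
  then have "real CARD('n) * lambda_min H \<le> (\<Sum>i\<in>UNIV. H$i$i)"
    by (simp add: lmin H trace_diag)
  then show ?thesis by (simp add: pos_le_divide_eq mult.commute)
qed

text \<open>Cauchy-Schwarz on the other three eigenvalues gives
  \<open>(S - \<lambda>)\<^sup>2 \<le> 3 (|\<lambda>|\<^sup>2 - \<lambda>\<^sup>2) < 3 (S\<^sup>2 - \<lambda>\<^sup>2)\<close>.\<close>
lemma lambda_min_gt_dim4:
  fixes H :: "real^'n^'n"
  assumes sym: "\<And>i j. H$i$j = H$j$i" and n4: "CARD('n) = 4"
    and S: "S = (\<Sum>i\<in>UNIV. H$i$i)" "S > 0" and sigma2: "sigma2 H > 0"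
  shows "- S/2 < lambda_min H"
proof -
  obtain E l where frame: "orthonormal_frame E" and H: "\<And>i j. H$i$j = orthonormal_frame.diag E l i j"
    and lmin: "lambda_min H = Min (range l)"
    using symmetric_matrix_eigenframe[OF sym] by blast
  note eig = symmetric_sigma2_pos_eigenvalues[OF sym frame H sigma2]
  define \<mu> where "\<mu> = Min (range l)"
  have "\<mu> \<in> range l" unfolding \<mu>_def by (rule Min_in) auto
  then obtain a0 where a0: "l a0 = \<mu>" by auto
  define I where "I = UNIV - {a0}"
  have "(\<Sum>a\<in>UNIV. l a) = l a0 + (\<Sum>a\<in>I. l a)" "(\<Sum>a\<in>UNIV. (l a)^2) = (l a0)^2 + (\<Sum>a\<in>I. (l a)^2)"
    unfolding I_def by (rule sum.remove; simp)+
  moreover have "(\<Sum>a\<in>UNIV. l a)^2 = S^2" "(l a0)^2 = \<mu>^2"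
    using eig(1) S(1) a0 by simp_all
  ultimately have sI: "(\<Sum>a\<in>I. l a) = S - \<mu>" "(\<Sum>a\<in>I. (l a)^2) < S^2 - \<mu>^2"
    using eig S(1) a0 by linarith+
  have "card I = 3" unfolding I_def using n4 by (simp add: card_Diff_singleton)
  then have "(S - \<mu>)^2 \<le> 3 * (\<Sum>a\<in>I. (l a)^2)"
    using Cauchy_Schwarz_ineq_sum[of "\<lambda>a. l a" "\<lambda>_. 1" I] sI(1) by simp
  also have "3 * (\<Sum>a\<in>I. (l a)^2) < 3 * (S^2 - \<mu>^2)" using sI(2) by simp
  finally have "(S - \<mu>)^2 < 3 * (S^2 - \<mu>^2)" .
  then have "(S - \<mu>) * (S - \<mu>) < (S - \<mu>) * (3 * (S + \<mu>))"
    by (simp add: power2_eq_square algebra_simps)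
  moreover have "\<mu> < S"
    using lambda_min_le_mean[OF sym] n4 S lmin unfolding \<mu>_def by simp
  ultimately have "- S/2 < \<mu>" by simp
  then show ?thesis unfolding lmin \<mu>_def .
qed

lemma cubic_form_inequality:
  fixes H :: "real^'n^'n" and T :: "'n \<Rightarrow> 'n \<Rightarrow> 'n \<Rightarrow> real"
  assumes sym: "\<And>i j. H$i$j = H$j$i"
    and s1: "\<And>i j k. T i j k = T j i k" and s2: "\<And>i j k. T i j k = T i k j"
    and S: "S = (\<Sum>i\<in>UNIV. H$i$i)" "S > 0" and sigma2: "sigma2 H > 0"
    and con: "\<And>k. (\<Sum>i\<in>UNIV. \<Sum>j\<in>UNIV. (S * (if i = j then 1 else 0) - H$i$j) * T i j k) = 0"
    and e: "e \<ge> 0" and slack: "slack_poly (real CARD('n)) S e 0 \<ge> 0"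
      "slack_poly (real CARD('n)) S e (S - lambda_min H) \<ge> 0"
  shows "(1+e)/S * (\<Sum>i\<in>UNIV. \<Sum>j\<in>UNIV. (S * (if i = j then 1 else 0) - H$i$j) * (\<Sum>a\<in>UNIV. T a a i) * (\<Sum>a\<in>UNIV. T a a j))
    \<le> (\<Sum>i\<in>UNIV. \<Sum>j\<in>UNIV. \<Sum>k\<in>UNIV. (T i j k)^2) - (\<Sum>k\<in>UNIV. (\<Sum>i\<in>UNIV. T i i k)^2)"
proof -
  obtain E l where frame: "orthonormal_frame E" and H: "\<And>i j. H$i$j = orthonormal_frame.diag E l i j"
    and lmin: "lambda_min H = Min (range l)"
    using symmetric_matrix_eigenframe[OF sym] by blast
  interpret orthonormal_frame E by (rule frame)
  note eig = symmetric_sigma2_pos_eigenvalues[OF sym frame H sigma2]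
  define v where "v k = (\<Sum>i\<in>UNIV. T i i k)" for k
  have tr: "(\<Sum>a\<in>UNIV. rotate3 T a a c) = (\<Sum>k\<in>UNIV. E c k * v k)" for c
    unfolding v_def by (rule trace_rotate3)
  have "(1+e)/S * (\<Sum>c\<in>UNIV. (S - l c) * (\<Sum>a\<in>UNIV. rotate3 T a a c)^2)
      \<le> (\<Sum>a\<in>UNIV. \<Sum>b\<in>UNIV. \<Sum>c\<in>UNIV. (rotate3 T a b c)^2) - (\<Sum>c\<in>UNIV. (\<Sum>a\<in>UNIV. rotate3 T a a c)^2)"
  proof (rule eigenframe_tensor_inequality[where l=l and n="real CARD('n)"])
    show "(\<Sum>a\<in>UNIV. (S - l a) * rotate3 T a a c) = 0" for c
      using weighted_trace_rotate3_eq_zero[of S l T c] con by (simp add: H)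
  qed (use S eig e slack lmin rotate3_swap12[OF s1] rotate3_swap23[OF s2] in auto)
  then show ?thesis
    unfolding tr sum_sq_rotate3 sum_sq_coords quadratic_form_diag
    by (simp add: H v_def mult.assoc)
qed

lemma quotient_estimate:
  fixes F X :: "'n::finite \<Rightarrow> 'n \<Rightarrow> real" and v :: "'n \<Rightarrow> real"
  assumes S: "S > 0"
    and bound: "(1+e)/S * (\<Sum>i\<in>UNIV. \<Sum>j\<in>UNIV. F i j * v i * v j) \<le> (\<Sum>i\<in>UNIV. \<Sum>j\<in>UNIV. F i j * X i j)"
  shows "e * (\<Sum>i\<in>UNIV. \<Sum>j\<in>UNIV. F i j * (v i / S) * (v j / S))
    \<le> (\<Sum>i\<in>UNIV. \<Sum>j\<in>UNIV. F i j * ((X i j * S - v j * v i) / S^2))"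
proof -
  define Q where "Q = (\<Sum>i\<in>UNIV. \<Sum>j\<in>UNIV. F i j * v i * v j)"
  define A where "A = (\<Sum>i\<in>UNIV. \<Sum>j\<in>UNIV. F i j * X i j)"
  have "(\<Sum>i\<in>UNIV. \<Sum>j\<in>UNIV. F i j * ((X i j * S - v j * v i) / S^2))
      = (\<Sum>i\<in>UNIV. \<Sum>j\<in>UNIV. (S * (F i j * X i j) - F i j * v i * v j) / S^2)"
    by (simp add: algebra_simps)
  also have "\<dots> = (S * A - Q) / S^2"
    unfolding A_def Q_def by (simp add: sum_divide_distrib[symmetric] sum_subtractf sum_distrib_left)
  finally have lhs: "(\<Sum>i\<in>UNIV. \<Sum>j\<in>UNIV. F i j * ((X i j * S - v j * v i) / S^2)) = (S * A - Q) / S^2" .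
  have rhs: "e * (\<Sum>i\<in>UNIV. \<Sum>j\<in>UNIV. F i j * (v i / S) * (v j / S)) = e * Q / S^2"
    unfolding Q_def by (simp add: sum_divide_distrib[symmetric] power2_eq_square algebra_simps)
  have "(1+e) * Q \<le> A * S" using bound S unfolding A_def Q_def by (simp add: pos_divide_le_eq)
  then have "e * Q \<le> S * A - Q" by (simp add: algebra_simps)
  then show ?thesis unfolding lhs rhs using S by (simp add: divide_right_mono)
qed

context sigma2_solution
begin

lemma log_laplacian_estimate:
  assumes x: "x \<in> \<Omega>" and e: "e \<ge> 0"
    and slack: "slack_poly (real CARD('n)) (laplacian u x) e 0 \<ge> 0"
      "slack_poly (real CARD('n)) (laplacian u x) e (laplacian u x - lambda_min (hessian u x)) \<ge> 0"
  defines "b \<equiv> \<lambda>y. ln (laplacian u y)" and "F \<equiv> laplacian u x *\<^sub>R (mat 1 :: real^'n^'n) - hessian u x"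
  shows "e * (\<Sum>i\<in>UNIV. \<Sum>j\<in>UNIV. F $ i $ j * pderiv i b x * pderiv j b x)
    \<le> (\<Sum>i\<in>UNIV. \<Sum>j\<in>UNIV. F $ i $ j * pderiv i (pderiv j b) x)"
proof -
  define S where "S = laplacian u x"
  define H where "H = hessian u x"
  define T where "T i j k = iter_pderiv [k,i,j] u x" for i j k
  define v where "v k = (\<Sum>a\<in>UNIV. T a a k)" for k
  define X where "X i j = (\<Sum>a\<in>UNIV. iter_pderiv [a,a,i,j] u x)" for i j
  have F: "F $ i $ j = S * (if i = j then 1 else 0) - H$i$j" for i j
    unfolding F_def S_def H_def by (simp add: mat_def)
  have "(\<Sum>i\<in>UNIV. \<Sum>j\<in>UNIV. F $ i $ j * X i j)
      = (\<Sum>i\<in>UNIV. \<Sum>j\<in>UNIV. \<Sum>k\<in>UNIV. F $ i $ j * iter_pderiv [k,k,i,j] u x)"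
    unfolding X_def by (simp add: sum_distrib_left)
  also have "\<dots> = (\<Sum>k\<in>UNIV. \<Sum>i\<in>UNIV. \<Sum>j\<in>UNIV. F $ i $ j * iter_pderiv [k,k,i,j] u x)"
    by (rule sum_move_inner_outside3)
  also have "\<dots> = (\<Sum>k\<in>UNIV. (\<Sum>i\<in>UNIV. \<Sum>j\<in>UNIV. (T i j k)^2) - (\<Sum>i\<in>UNIV. T i i k)^2)"
    unfolding F S_def H_def T_def using linearized_fourth_derivatives[OF x] by simp
  also have "\<dots> = (\<Sum>i\<in>UNIV. \<Sum>j\<in>UNIV. \<Sum>k\<in>UNIV. (T i j k)^2) - (\<Sum>k\<in>UNIV. (\<Sum>i\<in>UNIV. T i i k)^2)"
    using sum_move_inner_outside3[of "\<lambda>i j k. (T i j k)^2" UNIV UNIV UNIV] by (simp add: sum_subtractf)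
  also have "\<dots> \<ge> (1+e)/S * (\<Sum>i\<in>UNIV. \<Sum>j\<in>UNIV. F $ i $ j * v i * v j)"
    unfolding F v_def
  proof (rule cubic_form_inequality)
    show "\<And>i j. H$i$j = H$j$i" unfolding H_def using hessian_symmetric[OF x] .
    show "\<And>i j k. T i j k = T j i k" unfolding T_def by (rule third_derivative_swap[OF x])
    show "\<And>i j k. T i j k = T i k j" unfolding T_def by (rule third_derivative_rotate[OF x])
    show "S = (\<Sum>i\<in>UNIV. H$i$i)" "S > 0" "sigma2 H > 0"
      unfolding S_def H_def using laplacian_pos equation x by (simp_all add: laplacian_def hessian_def)
    show "\<And>k. (\<Sum>i\<in>UNIV. \<Sum>j\<in>UNIV. (S * (if i = j then 1 else 0) - H$i$j) * T i j k) = 0"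
      unfolding S_def H_def T_def by (rule linearized_third_derivatives[OF x])
  qed (use e slack in \<open>simp_all add: S_def H_def\<close>)
  finally have "e * (\<Sum>i\<in>UNIV. \<Sum>j\<in>UNIV. F $ i $ j * (v i / S) * (v j / S))
      \<le> (\<Sum>i\<in>UNIV. \<Sum>j\<in>UNIV. F $ i $ j * ((X i j * S - v j * v i) / S^2))"
    using laplacian_pos x unfolding S_def by (intro quotient_estimate) simp_all
  moreover have "pderiv i b x = v i / S" for i
    unfolding b_def v_def T_def S_def using pderiv_log_laplacian[OF x] by simp
  moreover have "pderiv i (pderiv j b) x = (X i j * S - v j * v i) / S^2" for i j
    unfolding b_def v_def T_def S_def X_def using pderiv2_log_laplacian[OF x] by simp
  ultimately show ?thesis by simp
qed

lemma log_laplacian_estimate_dim4: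
  assumes n: "CARD('n) = 4" and x: "x \<in> \<Omega>"
  defines "\<epsilon> \<equiv> 2/9 * (1/2 + lambda_min (hessian u x) / laplacian u x)"
  shows "\<epsilon> > 0 \<and>
    \<epsilon> * (\<Sum>i\<in>UNIV. \<Sum>j\<in>UNIV. (laplacian u x *\<^sub>R (mat 1 :: real^'n^'n) - hessian u x) $ i $ j
           * pderiv i (\<lambda>x. ln (laplacian u x)) x * pderiv j (\<lambda>x. ln (laplacian u x)) x)
    \<le> (\<Sum>i\<in>UNIV. \<Sum>j\<in>UNIV. (laplacian u x *\<^sub>R (mat 1 :: real^'n^'n) - hessian u x) $ i $ j
           * pderiv i (pderiv j (\<lambda>x. ln (laplacian u x))) x)"
proof -
  have "- laplacian u x / 2 < lambda_min (hessian u x)"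
    using lambda_min_gt_dim4[OF hessian_symmetric[OF x] n laplacian_eq_trace_hessian] laplacian_pos equation x
    by simp
  moreover have "lambda_min (hessian u x) \<le> laplacian u x / 4"
    using lambda_min_le_mean[OF hessian_symmetric[OF x]] n by (simp add: laplacian_eq_trace_hessian)
  moreover have "laplacian u x > 0" using laplacian_pos x by simp
  ultimately have "0 < \<epsilon>" "slack_poly 4 (laplacian u x) \<epsilon> 0 \<ge> 0"
    "slack_poly 4 (laplacian u x) \<epsilon> (laplacian u x - lambda_min (hessian u x)) \<ge> 0"
    using slack_poly_dim4[OF _ _ _ \<epsilon>_def[THEN meta_eq_to_obj_eq]] by auto
  then show ?thesis using log_laplacian_estimate[OF x, of \<epsilon>] n by simp
qed

lemma log_laplacian_estimate_dim_ge5: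
  assumes n: "CARD('n) \<ge> 5" and x: "x \<in> \<Omega>"
  defines "s \<equiv> sqrt (3 * (real CARD('n))^2 + 1)"
  assumes \<mu>: "lambda_min (hessian u x) / laplacian u x \<ge> - (s - (real CARD('n) - 1)) / (2 * real CARD('n))"
  defines "\<epsilon> \<equiv> (s - (real CARD('n) + 1)) / (3 * (real CARD('n) - 1)) *
    ((s - (real CARD('n) - 1)) / (2 * real CARD('n)) + lambda_min (hessian u x) / laplacian u x)"
  shows "\<epsilon> * (\<Sum>i\<in>UNIV. \<Sum>j\<in>UNIV. (laplacian u x *\<^sub>R (mat 1 :: real^'n^'n) - hessian u x) $ i $ j
           * pderiv i (\<lambda>x. ln (laplacian u x)) x * pderiv j (\<lambda>x. ln (laplacian u x)) x)
    \<le> (\<Sum>i\<in>UNIV. \<Sum>j\<in>UNIV. (laplacian u x *\<^sub>R (mat 1 :: real^'n^'n) - hessian u x) $ i $ j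
           * pderiv i (pderiv j (\<lambda>x. ln (laplacian u x))) x)"
proof -
  have "lambda_min (hessian u x) \<le> laplacian u x / real CARD('n)"
    using lambda_min_le_mean[OF hessian_symmetric[OF x]] by (simp add: laplacian_eq_trace_hessian)
  moreover have "laplacian u x > 0" using laplacian_pos x by simp
  moreover have "real CARD('n) \<ge> 5" using n by simp
  ultimately have "0 \<le> \<epsilon>" "slack_poly (real CARD('n)) (laplacian u x) \<epsilon> 0 \<ge> 0"
    "slack_poly (real CARD('n)) (laplacian u x) \<epsilon> (laplacian u x - lambda_min (hessian u x)) \<ge> 0"
    using slack_poly_dim_ge5[OF _ s_def[THEN meta_eq_to_obj_eq] _ \<mu> _ \<epsilon>_def[THEN meta_eq_to_obj_eq]]
    by auto
  then show ?thesis using log_laplacian_estimate[OF x, of \<epsilon>] by simp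
qed
end

theorem proposition2p1:
  fixes u :: "real^'n \<Rightarrow> real" and \<Omega> :: "(real^'n) set"
  assumes "open \<Omega>" and "smooth_on \<Omega> u"
    and "\<forall>x\<in>\<Omega>. sigma2 (hessian u x) = 1"
    and "\<forall>x\<in>\<Omega>. laplacian u x > 0"
  defines "b \<equiv> (\<lambda>x. ln (laplacian u x))"
    and "F \<equiv> (\<lambda>x. laplacian u x *\<^sub>R (mat 1 :: real^'n^'n) - hessian u x)"
  shows "(CARD('n) = 4 \<longrightarrow>
            (\<forall>x\<in>\<Omega>. let \<epsilon> = 2/9 * (1/2 + lambda_min (hessian u x) / laplacian u x) in
               \<epsilon> > 0 \<and>
               (\<Sum>i\<in>UNIV. \<Sum>j\<in>UNIV. F x $ i $ j * pderiv i (pderiv j b) x)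
                 \<ge> \<epsilon> * (\<Sum>i\<in>UNIV. \<Sum>j\<in>UNIV. F x $ i $ j * pderiv i b x * pderiv j b x)))
       \<and> (CARD('n) \<ge> 5 \<longrightarrow>
            (\<forall>x\<in>\<Omega>. let n = real CARD('n); s = sqrt (3 * n^2 + 1) in
               lambda_min (hessian u x) / laplacian u x \<ge> - (s - (n - 1)) / (2 * n) \<longrightarrow>
               (let \<epsilon> = (s - (n + 1)) / (3 * (n - 1)) *
                          ((s - (n - 1)) / (2 * n) + lambda_min (hessian u x) / laplacian u x) in
               (\<Sum>i\<in>UNIV. \<Sum>j\<in>UNIV. F x $ i $ j * pderiv i (pderiv j b) x)
                 \<ge> \<epsilon> * (\<Sum>i\<in>UNIV. \<Sum>j\<in>UNIV. F x $ i $ j * pderiv i b x * pderiv j b x))))"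
proof -
  interpret sigma2_solution u \<Omega> using assms(1-4) by unfold_locales
  show ?thesis
    unfolding Let_def b_def F_def
    by (intro conjI impI ballI log_laplacian_estimate_dim4 log_laplacian_estimate_dim_ge5)
qed

end
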